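(* For any $\mathcal{L}^S$-theory $\Gamma$, $\Gamma+\Sigma+\Sigma_1$ is consistent if and only if $\Gamma+\Sigma^*+\Sigma_1^*$ is consistent.
   Context: $\mathcal{L}$ is a countable first-order language containing a binary symbol $<$; $\mathcal{L}^S$ is $\mathcal{L}$ with Skolem function symbols and $T_{\mathrm{skolem}}$ the theory saying they are Skolem functions; "term" means $\mathcal{L}^S$-term. $\lambda$ is a singular cardinal, $\eta=\mathrm{cf}(\lambda)$, $\langle\mu_i;i<\eta\rangle$ increasing cardinals with limit $\lambda$, $C=\{c_{ij}\mid i<\eta,j<\mu_i\}$ and $C^*=\{c_{ij}\mid i,j<\omega\}$ sets of new constants. For a set $D$ of such doubly indexed constants (constants below range over $D$, and in every expression $\tau(c_{m_1n_1},\dots,c_{m_kn_k})$ the constants are strictly increasing lexicographically in the index pairs), define: items (i) $T_{\mathrm{skolem}}$ plus axioms that $<$ is a linear order; (ii) $c_{ij}<c_{kl}$ iff $(i,j)<(k,l)$ lexicographically; (iii) $\tau(c_{i_1j_1},\dots,c_{i_nj_n})<c_{ij}$ whenever $i_1,\dots,i_n<i$. The theory $\Sigma_1$ over $D$ is (i)–(iii) plus: (iv) for $i_n>1$, any $j$, any $u\ge i_n$, any $l_1,\dots,l_{n-q}$: if $\tau(c_{i_1j_1},\dots,c_{i_nj_n})<c_{(i_n-1)j}$ then $\tau(\bar c,c_{i_{q+1}j_{q+1}},\dots,c_{i_nj_n})=\tau(\bar c,c_{ul_1},\dots,c_{ul_{n-q}})$, with $q$ greatest such that $i_q\ne i_n$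 ($q=0$ if none) and $\bar c=\langle c_{i_1j_1},\dots,c_{i_qj_q}\rangle$. The theory $\Sigma$ over $D$ is (i)–(iii) plus: (iv) for any $u<i_n$, any $v$ and any $l_{m+1},\dots,l_n$: if $\tau(c_{i_1j_1},\dots,c_{i_nj_n})<c_{uv}$ then $\tau(\bar c,c_{i_{m+1}j_{m+1}},\dots,c_{i_nj_n})=\tau(\bar c,c_{i_{m+1}l_{m+1}},\dots,c_{i_nl_n})$, with $m$ the smallest integer such that $i_{m+1}>u$ and $\bar c=\langle c_{i_1j_1},\dots,c_{i_mj_m}\rangle$. $\Sigma,\Sigma_1$ denote these theories over $C$; $\Sigma^*,\Sigma_1^*$ denote them over $C^*$. *)

theory Defs
  imports Main "HOL-Library.Countable"
begin

datatype 's trm = Var nat | Fun 's "'s trm list"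

datatype ('s,'r) fm =
    FEq "'s trm" "'s trm"
  | FRel 'r "'s trm list"
  | FFalse
  | FImp "('s,'r) fm" "('s,'r) fm"
  | FAll nat "('s,'r) fm"

definition FNeg :: "('s,'r) fm \<Rightarrow> ('s,'r) fm" where
  "FNeg \<phi> = FImp \<phi> FFalse"

definition FEx :: "nat \<Rightarrow> ('s,'r) fm \<Rightarrow> ('s,'r) fm" where
  "FEx v \<phi> = FNeg (FAll v (FNeg \<phi>))"

primrec fvt :: "'s trm \<Rightarrow> nat set" where
  "fvt (Var n) = {n}"
| "fvt (Fun s ts) = \<Union> (set (map fvt ts))"

primrec fvf :: "('s,'r) fm \<Rightarrow> nat set" where
  "fvf (FEq t u) = fvt t \<union> fvt u"
| "fvf (FRel r ts) = \<Union> (set (map fvt ts))"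
| "fvf FFalse = {}"
| "fvf (FImp \<phi> \<psi>) = fvf \<phi> \<union> fvf \<psi>"
| "fvf (FAll v \<phi>) = fvf \<phi> - {v}"

text \<open>Function symbols of L^S: the symbols of L, plus a Skolem function symbol
  Sk phi v for every L^S-formula phi and variable v (for the formula EX v. phi);
  its arguments are the free variables of EX v. phi in increasing order.\<close>

datatype ('f,'r) ssym = Orig 'f | Sk "(('f,'r) ssym, 'r) fm" nat

definition skargs :: "nat \<Rightarrow> ('s,'r) fm \<Rightarrow> nat list" where
  "skargs v \<phi> = sorted_list_of_set (fvf (FEx v \<phi>))"

fun sar :: "('f \<Rightarrow> nat) \<Rightarrow> ('f,'r) ssym \<Rightarrow> nat" where
  "sar af (Orig f) = af f"
| "sar af (Sk \<phi> v) = length (skargs v \<phi>)"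

inductive wfs :: "('f \<Rightarrow> nat) \<Rightarrow> ('r \<Rightarrow> nat) \<Rightarrow> ('f,'r) ssym \<Rightarrow> bool"
  and wft :: "('f \<Rightarrow> nat) \<Rightarrow> ('r \<Rightarrow> nat) \<Rightarrow> ('f,'r) ssym trm \<Rightarrow> bool"
  and wff :: "('f \<Rightarrow> nat) \<Rightarrow> ('r \<Rightarrow> nat) \<Rightarrow> (('f,'r) ssym, 'r) fm \<Rightarrow> bool"
  for af ar where
  "wfs af ar (Orig f)"
| "wff af ar \<phi> \<Longrightarrow> wfs af ar (Sk \<phi> v)"
| "wft af ar (Var n)"
| "wfs af ar s \<Longrightarrow> length ts = sar af s \<Longrightarrow> (\<forall>t\<in>set ts. wft af ar t) \<Longrightarrow> wft af ar (Fun s ts)"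
| "wft af ar t \<Longrightarrow> wft af ar u \<Longrightarrow> wff af ar (FEq t u)"
| "length ts = ar r \<Longrightarrow> (\<forall>t\<in>set ts. wft af ar t) \<Longrightarrow> wff af ar (FRel r ts)"
| "wff af ar FFalse"
| "wff af ar \<phi> \<Longrightarrow> wff af ar \<psi> \<Longrightarrow> wff af ar (FImp \<phi> \<psi>)"
| "wff af ar \<phi> \<Longrightarrow> wff af ar (FAll v \<phi>)"

primrec evalt :: "('s \<Rightarrow> 'a list \<Rightarrow> 'a) \<Rightarrow> (nat \<Rightarrow> 'a) \<Rightarrow> 's trm \<Rightarrow> 'a" where
  "evalt F e (Var n) = e n"
| "evalt F e (Fun s ts) = F s (map (evalt F e) ts)"

primrec satf :: "'a set \<Rightarrow> ('s \<Rightarrow> 'a list \<Rightarrow> 'a) \<Rightarrow> ('r \<Rightarrow> 'a list \<Rightarrow> bool)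
                 \<Rightarrow> (nat \<Rightarrow> 'a) \<Rightarrow> ('s,'r) fm \<Rightarrow> bool" where
  "satf D F R e (FEq t u) = (evalt F e t = evalt F e u)"
| "satf D F R e (FRel r ts) = R r (map (evalt F e) ts)"
| "satf D F R e FFalse = False"
| "satf D F R e (FImp \<phi> \<psi>) = (satf D F R e \<phi> \<longrightarrow> satf D F R e \<psi>)"
| "satf D F R e (FAll v \<phi>) = (\<forall>a\<in>D. satf D F R (e(v := a)) \<phi>)"

definition is_structure :: "'a set \<Rightarrow> ('s \<Rightarrow> 'a list \<Rightarrow> 'a) \<Rightarrow> bool" where
  "is_structure D F \<longleftrightarrow> D \<noteq> {} \<and> (\<forall>s as. set as \<subseteq> D \<longrightarrow> F s as \<in> D)"

definition models :: "'a set \<Rightarrow> ('s \<Rightarrow> 'a list \<Rightarrow> 'a) \<Rightarrow> ('r \<Rightarrow> 'a list \<Rightarrow> bool)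
                      \<Rightarrow> ('s,'r) fm \<Rightarrow> bool" where
  "models D F R \<phi> \<longleftrightarrow> (\<forall>e. range e \<subseteq> D \<longrightarrow> satf D F R e \<phi>)"

definition skolem_ok :: "('f \<Rightarrow> nat) \<Rightarrow> ('r \<Rightarrow> nat) \<Rightarrow> 'a set
     \<Rightarrow> (('f,'r) ssym \<Rightarrow> 'a list \<Rightarrow> 'a) \<Rightarrow> ('r \<Rightarrow> 'a list \<Rightarrow> bool) \<Rightarrow> bool" where
  "skolem_ok af ar D F R \<longleftrightarrow>
     (\<forall>\<phi> v e. wff af ar \<phi> \<longrightarrow> range e \<subseteq> D \<longrightarrow>
        (\<exists>a\<in>D. satf D F R (e(v := a)) \<phi>) \<longrightarrow>
        satf D F R (e(v := F (Sk \<phi> v) (map e (skargs v \<phi>)))) \<phi>)"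

definition linord :: "'a set \<Rightarrow> ('r \<Rightarrow> 'a list \<Rightarrow> bool) \<Rightarrow> 'r \<Rightarrow> bool" where
  "linord D R lt \<longleftrightarrow>
     (\<forall>a\<in>D. \<not> R lt [a, a]) \<and>
     (\<forall>a\<in>D. \<forall>b\<in>D. \<forall>c\<in>D. R lt [a, b] \<longrightarrow> R lt [b, c] \<longrightarrow> R lt [a, c]) \<and>
     (\<forall>a\<in>D. \<forall>b\<in>D. a \<noteq> b \<longrightarrow> R lt [a, b] \<or> R lt [b, a])"

text \<open>Index pairs (i,j) range over a set P of pairs of a linearly ordered index type;
  c (i,j) is the interpretation of the constant c_ij.\<close>

definition lexless :: "'i::linorder \<times> 'i \<Rightarrow> 'i \<times> 'i \<Rightarrow> bool" where
  "lexless p q \<longleftrightarrow> fst p < fst q \<or> (fst p = fst q \<and> snd p < snd q)"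

text \<open>Value of tau(c_{m1 n1},...,c_{mk nk}): variable t is replaced by the t-th constant.\<close>

definition valc :: "('s \<Rightarrow> 'a list \<Rightarrow> 'a) \<Rightarrow> ('i \<times> 'i \<Rightarrow> 'a) \<Rightarrow> 's trm \<Rightarrow> ('i \<times> 'i) list \<Rightarrow> 'a" where
  "valc F c \<tau> cs = evalt F (\<lambda>t. c (cs ! t)) \<tau>"

definition admissible :: "('f \<Rightarrow> nat) \<Rightarrow> ('r \<Rightarrow> nat) \<Rightarrow> ('i::linorder \<times> 'i) set
     \<Rightarrow> ('f,'r) ssym trm \<Rightarrow> ('i \<times> 'i) list \<Rightarrow> bool" where
  "admissible af ar P \<tau> cs \<longleftrightarrow>
     wft af ar \<tau> \<and> fvt \<tau> \<subseteq> {..<length cs} \<and> set cs \<subseteq> P \<and> sorted_wrt lexless cs"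

definition sig_ii :: "('i::linorder \<times> 'i) set \<Rightarrow> ('r \<Rightarrow> 'a list \<Rightarrow> bool) \<Rightarrow> 'r
     \<Rightarrow> ('i \<times> 'i \<Rightarrow> 'a) \<Rightarrow> bool" where
  "sig_ii P R lt c \<longleftrightarrow> (\<forall>p\<in>P. \<forall>q\<in>P. R lt [c p, c q] \<longleftrightarrow> lexless p q)"

definition sig_iii :: "('f \<Rightarrow> nat) \<Rightarrow> ('r \<Rightarrow> nat) \<Rightarrow> ('i::linorder \<times> 'i) set
     \<Rightarrow> (('f,'r) ssym \<Rightarrow> 'a list \<Rightarrow> 'a) \<Rightarrow> ('r \<Rightarrow> 'a list \<Rightarrow> bool) \<Rightarrow> 'r
     \<Rightarrow> ('i \<times> 'i \<Rightarrow> 'a) \<Rightarrow> bool" where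
  "sig_iii af ar P F R lt c \<longleftrightarrow>
     (\<forall>\<tau> cs p. admissible af ar P \<tau> cs \<longrightarrow> p \<in> P \<longrightarrow> (\<forall>q\<in>set cs. fst q < fst p) \<longrightarrow>
        R lt [valc F c \<tau> cs, c p])"

definition sig_iv :: "('f \<Rightarrow> nat) \<Rightarrow> ('r \<Rightarrow> nat) \<Rightarrow> ('i::linorder \<times> 'i) set
     \<Rightarrow> (('f,'r) ssym \<Rightarrow> 'a list \<Rightarrow> 'a) \<Rightarrow> ('r \<Rightarrow> 'a list \<Rightarrow> bool) \<Rightarrow> 'r
     \<Rightarrow> ('i \<times> 'i \<Rightarrow> 'a) \<Rightarrow> bool" where
  "sig_iv af ar P F R lt c \<longleftrightarrow>
     (\<forall>\<tau> cs u v ls m cs'.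
        admissible af ar P \<tau> cs \<longrightarrow> cs \<noteq> [] \<longrightarrow> u < fst (last cs) \<longrightarrow> (u, v) \<in> P \<longrightarrow>
        R lt [valc F c \<tau> cs, c (u, v)] \<longrightarrow>
        m = length (takeWhile (\<lambda>q. fst q \<le> u) cs) \<longrightarrow>
        length ls = length cs - m \<longrightarrow>
        cs' = take m cs @ map2 (\<lambda>q l. (fst q, l)) (drop m cs) ls \<longrightarrow>
        set cs' \<subseteq> P \<longrightarrow> sorted_wrt lexless cs' \<longrightarrow>
        valc F c \<tau> cs = valc F c \<tau> cs')"

text \<open>Index arithmetic for Sigma_1: "i > 1" means at least two indices lie below i;
  "w = i - 1" means w is the immediate predecessor of i.\<close>

definition gt1 :: "'i::linorder \<Rightarrow> bool" where
  "gt1 i \<longleftrightarrow> (\<exists>a b. a < b \<and> b < i)"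

definition ipred :: "'i::linorder \<Rightarrow> 'i \<Rightarrow> bool" where
  "ipred w i \<longleftrightarrow> w < i \<and> \<not> (\<exists>y. w < y \<and> y < i)"

definition sig1_iv :: "('f \<Rightarrow> nat) \<Rightarrow> ('r \<Rightarrow> nat) \<Rightarrow> ('i::linorder \<times> 'i) set
     \<Rightarrow> (('f,'r) ssym \<Rightarrow> 'a list \<Rightarrow> 'a) \<Rightarrow> ('r \<Rightarrow> 'a list \<Rightarrow> bool) \<Rightarrow> 'r
     \<Rightarrow> ('i \<times> 'i \<Rightarrow> 'a) \<Rightarrow> bool" where
  "sig1_iv af ar P F R lt c \<longleftrightarrow>
     (\<forall>\<tau> cs w j u ls q cs'.
        admissible af ar P \<tau> cs \<longrightarrow> cs \<noteq> [] \<longrightarrow> gt1 (fst (last cs)) \<longrightarrow>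
        ipred w (fst (last cs)) \<longrightarrow> (w, j) \<in> P \<longrightarrow> fst (last cs) \<le> u \<longrightarrow>
        R lt [valc F c \<tau> cs, c (w, j)] \<longrightarrow>
        q = length (takeWhile (\<lambda>p. fst p \<noteq> fst (last cs)) cs) \<longrightarrow>
        length ls = length cs - q \<longrightarrow>
        cs' = take q cs @ map (Pair u) ls \<longrightarrow>
        set cs' \<subseteq> P \<longrightarrow> sorted_wrt lexless cs' \<longrightarrow>
        valc F c \<tau> cs = valc F c \<tau> cs')"

text \<open>All function symbols of the combined languages L^S + C and L^S + C*.\<close>

datatype ('f,'r,'o) asym = LS "('f,'r) ssym" | CC 'o 'o | CS nat nat

definition model_of :: "('f \<Rightarrow> nat) \<Rightarrow> ('r \<Rightarrow> nat) \<Rightarrow> 'r \<Rightarrow> (('f,'r) ssym,'r) fm set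
     \<Rightarrow> ('i::linorder \<times> 'i) set \<Rightarrow> ('i \<times> 'i \<Rightarrow> ('f,'r,'o) asym)
     \<Rightarrow> ('f,'r,'o) asym set \<Rightarrow> (('f,'r,'o) asym \<Rightarrow> ('f,'r,'o) asym list \<Rightarrow> ('f,'r,'o) asym)
     \<Rightarrow> ('r \<Rightarrow> ('f,'r,'o) asym list \<Rightarrow> bool) \<Rightarrow> bool" where
  "model_of af ar lt \<Gamma> P csym D F R \<longleftrightarrow>
     (let FL = (\<lambda>s. F (LS s)); c = (\<lambda>p. F (csym p) []) in
      is_structure D F \<and> skolem_ok af ar D FL R \<and> linord D R lt \<and>
      (\<forall>\<phi>\<in>\<Gamma>. models D FL R \<phi>) \<and>
      sig_ii P R lt c \<and> sig_iii af ar P FL R lt c \<and>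
      sig_iv af ar P FL R lt c \<and> sig1_iv af ar P FL R lt c)"

text \<open>Consistency is taken semantically (has a model; equivalent by completeness).
  By downward Loewenheim--Skolem it suffices to consider models whose universe is a
  subset of the symbol type, which has cardinality at least that of the language.\<close>

definition consistent_C :: "('f \<Rightarrow> nat) \<Rightarrow> ('r \<Rightarrow> nat) \<Rightarrow> 'r \<Rightarrow> 'o::wellorder \<Rightarrow> ('o \<Rightarrow> 'o)
     \<Rightarrow> (('f,'r) ssym,'r) fm set \<Rightarrow> bool" where
  "consistent_C af ar lt eta mu \<Gamma> \<longleftrightarrow>
     (\<exists>(D :: ('f,'r,'o) asym set) F R.
        model_of af ar lt \<Gamma> {(i, j). i < eta \<and> j < mu i} (\<lambda>(i, j). CC i j) D F R)"

definition consistent_Cstar :: "('f \<Rightarrow> nat) \<Rightarrow> ('r \<Rightarrow> nat) \<Rightarrow> 'r \<Rightarrow> (('f,'r) ssym,'r) fm set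
     \<Rightarrow> 'o itself \<Rightarrow> bool" where
  "consistent_Cstar af ar lt \<Gamma> _ \<longleftrightarrow>
     (\<exists>(D :: ('f,'r,'o) asym set) F R.
        model_of af ar lt \<Gamma> (UNIV :: (nat \<times> nat) set) (\<lambda>(i, j). CS i j) D F R)"

section \<open>Cardinals as initial ordinals in a well-ordered type\<close>

definition is_cardinal :: "'o::wellorder \<Rightarrow> bool" where
  "is_cardinal y \<longleftrightarrow> (\<forall>z<y. \<not> (\<exists>f. bij_betw f {x. x < z} {x. x < y}))"

definition cofinality :: "'o::wellorder \<Rightarrow> 'o" where
  "cofinality lam = (LEAST d. \<exists>g. (\<forall>x<d. g x < lam) \<and> (\<forall>y<lam. \<exists>x<d. y \<le> g x))"

definition singular_cardinal :: "'o::wellorder \<Rightarrow> bool" where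
  "singular_cardinal lam \<longleftrightarrow> is_cardinal lam \<and> infinite {x. x < lam} \<and> cofinality lam < lam"

end

theory Submission
  imports Defs "HOL-Library.Infinite_Set"
begin

text \<open>The axioms of \<open>\<Sigma>\<close> and \<open>\<Sigma>\<^sub>1\<close> that mention finitely many constants depend only on how
  their index pairs are arranged: the lexicographic order, the order of the rows and which row
  immediately precedes which. Every finite set of indices of one family embeds in this sense into
  the index set of the other one: \<open>\<nat> \<times> \<nat>\<close> even embeds into \<open>C\<close> as a whole, via an
  \<open>\<omega>\<close>-sequence of consecutive rows above a row of infinite length, and a finite subset of \<open>C\<close>
  embeds into \<open>\<nat> \<times> \<nat>\<close> by counting rows and columns. Pulling a model back along these
  embeddings satisfies the axioms for the constants involved, and an ultraproduct over the finite
  index sets gives a model for the other family. Its elements are classes of closed terms; the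
  Skolem functions supply the witnesses in the quantifier step of Los's theorem.\<close>

section \<open>Ultrafilters\<close>

definition ultrafilter :: "'a filter \<Rightarrow> bool" where
  "ultrafilter U \<longleftrightarrow> U \<noteq> bot \<and> (\<forall>P. eventually P U \<or> eventually (\<lambda>x. \<not> P x) U)"

lemma ultrafilter_eventually_const:
  "ultrafilter U \<Longrightarrow> eventually (\<lambda>x. Q) U \<longleftrightarrow> Q"
  unfolding ultrafilter_def by (cases Q) (auto simp: trivial_limit_def)

lemma ultrafilter_eventually_not:
  assumes "ultrafilter U"
  shows "eventually (\<lambda>x. \<not> P x) U \<longleftrightarrow> \<not> eventually P U"
proof -
  have "\<not> (eventually P U \<and> eventually (\<lambda>x. \<not> P x) U)"
    using eventually_conj[of P U "\<lambda>x. \<not> P x"] ultrafilter_eventually_const[OF assms, of False]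
    by auto
  then show ?thesis
    using assms unfolding ultrafilter_def by blast
qed

lemma ultrafilter_eventually_imp:
  assumes "ultrafilter U"
  shows "eventually (\<lambda>x. P x \<longrightarrow> Q x) U \<longleftrightarrow> (eventually P U \<longrightarrow> eventually Q U)"
  using ultrafilter_eventually_not[OF assms, of P] eventually_mp[of P Q U]
  by (metis (mono_tags, lifting) eventually_mono)

lemma ultrafilter_eventually_disj:
  assumes "ultrafilter U"
  shows "eventually (\<lambda>x. P x \<or> Q x) U \<longleftrightarrow> eventually P U \<or> eventually Q U"
proof -
  have "eventually (\<lambda>x. P x \<or> Q x) U \<longleftrightarrow> eventually (\<lambda>x. \<not> P x \<longrightarrow> Q x) U"
    by (rule arg_cong[where f="\<lambda>P. eventually P U"]) auto
  also have "\<dots> \<longleftrightarrow> (\<not> eventually P U \<longrightarrow> eventually Q U)"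
    by (simp only: ultrafilter_eventually_imp[OF assms] ultrafilter_eventually_not[OF assms])
  finally show ?thesis by blast
qed

definition finite_intersection_property :: "'a set set \<Rightarrow> bool" where
  "finite_intersection_property \<A> \<longleftrightarrow> (\<forall>\<X>\<subseteq>\<A>. finite \<X> \<longrightarrow> \<Inter>\<X> \<noteq> {})"

lemma finite_intersection_property_Union_chain:
  assumes "\<C> \<noteq> {}" "subset.chain {\<A>. finite_intersection_property \<A>} \<C>"
  shows "finite_intersection_property (\<Union>\<C>)"
  unfolding finite_intersection_property_def
proof (intro allI impI)
  fix \<X> assume "\<X> \<subseteq> \<Union>\<C>" "finite \<X>"
  then obtain \<A> where "\<A> \<in> \<C>" "\<X> \<subseteq> \<A>"
    using finite_subset_Union_chain assms by blast
  with assms(2) \<open>finite \<X>\<close> show "\<Inter>\<X> \<noteq> {}"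
    unfolding finite_intersection_property_def subset_chain_def by blast
qed

lemma finite_intersection_property_insertD:
  assumes "\<not> finite_intersection_property (insert A \<M>)"
  obtains \<X> where "\<X> \<subseteq> \<M>" "finite \<X>" "A \<inter> \<Inter>\<X> = {}"
proof -
  obtain \<X> where "\<X> \<subseteq> insert A \<M>" "finite \<X>" "\<Inter>\<X> = {}"
    using assms unfolding finite_intersection_property_def by blast
  moreover have "A \<inter> \<Inter>(\<X> - {A}) \<subseteq> \<Inter>\<X>" by blast
  ultimately show thesis
    using that[of "\<X> - {A}"] by blast
qed

lemma ex_maximal_finite_intersection_property:
  assumes "finite_intersection_property \<B>"
  shows "\<exists>\<M>. \<B> \<subseteq> \<M> \<and> finite_intersection_property \<M> \<and>
    (\<forall>\<A>. finite_intersection_property \<A> \<longrightarrow> \<M> \<subseteq> \<A> \<longrightarrow> \<A> = \<M>)"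
proof -
  let ?FIP = "{\<A>. \<B> \<subseteq> \<A> \<and> finite_intersection_property \<A>}"
  have "\<exists>\<M>\<in>?FIP. \<forall>\<A>\<in>?FIP. \<M> \<subseteq> \<A> \<longrightarrow> \<A> = \<M>"
  proof (rule subset_Zorn_nonempty)
    have "\<B> \<in> ?FIP" using assms by simp
    then show "?FIP \<noteq> {}" by blast
    fix \<C> assume "\<C> \<noteq> {}" and chain: "subset.chain ?FIP \<C>"
    then have "\<C> \<subseteq> ?FIP" unfolding subset_chain_def by blast
    with \<open>\<C> \<noteq> {}\<close> have "\<B> \<subseteq> \<Union>\<C>" by blast
    moreover have "subset.chain {\<A>. finite_intersection_property \<A>} \<C>"
      using chain unfolding subset_chain_def by blast
    ultimately show "\<Union>\<C> \<in> ?FIP"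
      using finite_intersection_property_Union_chain[OF \<open>\<C> \<noteq> {}\<close>] by blast
  qed
  then obtain \<M> where "\<M> \<in> ?FIP" and max: "\<forall>\<A>\<in>?FIP. \<M> \<subseteq> \<A> \<longrightarrow> \<A> = \<M>" ..
  then show ?thesis
    by (intro exI[of _ \<M>]) auto
qed

text \<open>A maximal family with the finite intersection property contains every set or its complement;
  the sets containing a finite intersection of its members then form an ultrafilter.\<close>

lemma ultrafilter_extending_fip:
  assumes "finite_intersection_property \<B>"
  shows "\<exists>U. ultrafilter U \<and> (\<forall>B\<in>\<B>. eventually (\<lambda>x. x \<in> B) U)"
proof -
  obtain \<M> where "\<B> \<subseteq> \<M>" and fip: "finite_intersection_property \<M>"
    and max: "\<forall>\<A>. finite_intersection_property \<A> \<longrightarrow> \<M> \<subseteq> \<A> \<longrightarrow> \<A> = \<M>"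
    using ex_maximal_finite_intersection_property[OF assms] by blast
  have member_or_complement: "A \<in> \<M> \<or> - A \<in> \<M>" for A
  proof (rule ccontr)
    assume "\<not> ?thesis"
    then have "\<not> finite_intersection_property (insert A \<M>)"
      "\<not> finite_intersection_property (insert (- A) \<M>)"
      using max[rule_format, of "insert A \<M>"] max[rule_format, of "insert (- A) \<M>"] by blast+
    then obtain \<X> \<Y> where "\<X> \<union> \<Y> \<subseteq> \<M>" "finite (\<X> \<union> \<Y>)" "A \<inter> \<Inter>\<X> = {}" "- A \<inter> \<Inter>\<Y> = {}"
      by (elim finite_intersection_property_insertD) (metis finite_UnI le_sup_iff)
    moreover from this have "\<Inter>(\<X> \<union> \<Y>) = {}" by blast
    ultimately show False
      using fip unfolding finite_intersection_property_def by blast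
  qed
  define E where "E P \<longleftrightarrow> (\<exists>\<X>\<subseteq>\<M>. finite \<X> \<and> \<Inter>\<X> \<subseteq> {x. P x})" for P
  have "is_filter E"
  proof
    show "E (\<lambda>x. True)" unfolding E_def by blast
    fix P Q assume "E P" "E Q"
    then obtain \<X> \<Y> where "\<X> \<subseteq> \<M>" "finite \<X>" "\<Inter>\<X> \<subseteq> {x. P x}"
      and "\<Y> \<subseteq> \<M>" "finite \<Y>" "\<Inter>\<Y> \<subseteq> {x. Q x}"
      unfolding E_def by blast
    then show "E (\<lambda>x. P x \<and> Q x)"
      unfolding E_def by (intro exI[of _ "\<X> \<union> \<Y>"]) auto
  next
    fix P Q :: "'a \<Rightarrow> bool" assume "\<forall>x. P x \<longrightarrow> Q x" "E P"
    then show "E Q" unfolding E_def by blast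
  qed
  define U where "U = Abs_filter E"
  have eventually_U: "eventually P U \<longleftrightarrow> E P" for P
    unfolding U_def using \<open>is_filter E\<close> by (simp add: eventually_Abs_filter)
  have singleton: "E (\<lambda>x. x \<in> A)" if "A \<in> \<M>" for A
    unfolding E_def using that by (intro exI[of _ "{A}"]) auto
  have "ultrafilter U"
    unfolding ultrafilter_def
  proof (intro conjI allI)
    show "U \<noteq> bot"
      using fip unfolding trivial_limit_def eventually_U E_def finite_intersection_property_def by auto
    show "eventually P U \<or> eventually (\<lambda>x. \<not> P x) U" for P
      using member_or_complement[of "{x. P x}"] singleton[of "{x. P x}"] singleton[of "{x. \<not> P x}"]
      unfolding eventually_U by (auto simp: Compl_eq)
  qed
  moreover have "eventually (\<lambda>x. x \<in> B) U" if "B \<in> \<B>" for B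
    using that \<open>\<B> \<subseteq> \<M>\<close> singleton by (auto simp: eventually_U)
  ultimately show ?thesis by blast
qed

lemma ex_ultrafilter_finite_subsets:
  "\<exists>U. ultrafilter U \<and> (\<forall>A. finite A \<longrightarrow> A \<subseteq> P \<longrightarrow> eventually (\<lambda>S. finite S \<and> A \<subseteq> S \<and> S \<subseteq> P) U)"
proof -
  define cone where "cone A = {S. finite S \<and> A \<subseteq> S \<and> S \<subseteq> P}" for A
  have "finite_intersection_property (cone ` {A. finite A \<and> A \<subseteq> P})"
    unfolding finite_intersection_property_def
  proof (intro allI impI)
    fix \<X> assume "\<X> \<subseteq> cone ` {A. finite A \<and> A \<subseteq> P}" "finite \<X>"
    from finite_subset_image[OF this(2,1)] obtain \<A>
      where \<A>: "\<A> \<subseteq> {A. finite A \<and> A \<subseteq> P}" "finite \<A>" and "\<X> = cone ` \<A>"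
      by blast
    have "finite (\<Union>\<A>)" "\<Union>\<A> \<subseteq> P"
      using \<A> by auto
    then have "\<Union>\<A> \<in> \<Inter>\<X>"
      unfolding \<open>\<X> = cone ` \<A>\<close> cone_def by blast
    then show "\<Inter>\<X> \<noteq> {}" by blast
  qed
  then obtain U where "ultrafilter U" and in_cones: "\<forall>B\<in>cone ` {A. finite A \<and> A \<subseteq> P}. eventually (\<lambda>S. S \<in> B) U"
    using ultrafilter_extending_fip by blast
  moreover have "eventually (\<lambda>S. finite S \<and> A \<subseteq> S \<and> S \<subseteq> P) U" if "finite A" "A \<subseteq> P" for A
    using in_cones that unfolding cone_def by simp
  ultimately show ?thesis by blast
qed

section \<open>Embeddings of index sets\<close>

definition index_emb :: "('i::linorder \<times> 'i) set \<Rightarrow> ('j::linorder \<times> 'j) set \<Rightarrow> ('j \<times> 'j \<Rightarrow> 'i \<times> 'i) \<Rightarrow> bool" where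
  "index_emb P S g \<longleftrightarrow> g ` S \<subseteq> P \<and>
     (\<forall>p\<in>S. \<forall>q\<in>S. (lexless (g p) (g q) \<longleftrightarrow> lexless p q) \<and> (fst (g p) < fst (g q) \<longleftrightarrow> fst p < fst q) \<and>
        (gt1 (fst q) \<longrightarrow> ipred (fst p) (fst q) \<longrightarrow> gt1 (fst (g q)) \<and> ipred (fst (g p)) (fst (g q))))"

context
  fixes P :: "('i::linorder \<times> 'i) set" and S :: "('j::linorder \<times> 'j) set" and g
  assumes emb: "index_emb P S g"
begin

lemma index_emb_mem: "p \<in> S \<Longrightarrow> g p \<in> P"
  using emb unfolding index_emb_def by blast

lemma index_emb_lexless: "p \<in> S \<Longrightarrow> q \<in> S \<Longrightarrow> lexless (g p) (g q) \<longleftrightarrow> lexless p q"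
  using emb unfolding index_emb_def by blast

lemma index_emb_fst_less: "p \<in> S \<Longrightarrow> q \<in> S \<Longrightarrow> fst (g p) < fst (g q) \<longleftrightarrow> fst p < fst q"
  using emb unfolding index_emb_def by blast

lemma index_emb_fst_le: "p \<in> S \<Longrightarrow> q \<in> S \<Longrightarrow> fst (g p) \<le> fst (g q) \<longleftrightarrow> fst p \<le> fst q"
  using index_emb_fst_less[of q p] by (meson not_less)

lemma index_emb_fst_eq: "p \<in> S \<Longrightarrow> q \<in> S \<Longrightarrow> fst (g p) = fst (g q) \<longleftrightarrow> fst p = fst q"
  using index_emb_fst_le[of p q] index_emb_fst_le[of q p] by auto

lemma index_emb_ipred:
  "p \<in> S \<Longrightarrow> q \<in> S \<Longrightarrow> gt1 (fst q) \<Longrightarrow> ipred (fst p) (fst q) \<Longrightarrow>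
    gt1 (fst (g q)) \<and> ipred (fst (g p)) (fst (g q))"
  using emb unfolding index_emb_def by blast

lemma index_emb_sorted: "set cs \<subseteq> S \<Longrightarrow> sorted_wrt lexless (map g cs) \<longleftrightarrow> sorted_wrt lexless cs"
proof (induction cs)
  case (Cons p cs)
  have "lexless (g p) (g q) \<longleftrightarrow> lexless p q" if "q \<in> set cs" for q
    using Cons.prems that by (intro index_emb_lexless) auto
  then have "(\<forall>q\<in>set cs. lexless (g p) (g q)) \<longleftrightarrow> (\<forall>q\<in>set cs. lexless p q)"
    by blast
  with Cons show ?case by simp
qed simp

lemma index_emb_admissible:
  "admissible af ar S \<tau> cs \<Longrightarrow> admissible af ar P \<tau> (map g cs)"
  unfolding admissible_def using index_emb_sorted index_emb_mem by auto

lemma index_emb_map_replace_columns: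
  assumes "m \<le> length cs" "length ls = length cs - m" "set cs \<subseteq> S" "set cs' \<subseteq> S"
    and cs': "cs' = take m cs @ map2 (\<lambda>q l. (fst q, l)) (drop m cs) ls"
  shows "map g cs' = take m (map g cs) @ map2 (\<lambda>q l. (fst q, l)) (drop m (map g cs)) (map (snd \<circ> g) (drop m cs'))"
proof -
  have map2_rows: "map g (map2 (\<lambda>q l. (fst q, l)) xs ys) =
      map2 (\<lambda>q l. (fst q, l)) (map g xs) (map (snd \<circ> g) (map2 (\<lambda>q l. (fst q, l)) xs ys))"
    if "length xs = length ys" "set xs \<subseteq> S" "set (map2 (\<lambda>q l. (fst q, l)) xs ys) \<subseteq> S" for xs ys
    using that
  proof (induction xs ys rule: list_induct2)
    case (Cons x xs y ys)
    then have "fst (g (fst x, y)) = fst (g x)"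
      using index_emb_fst_eq[of "(fst x, y)" x] by auto
    with Cons show ?case by (auto simp: prod_eq_iff)
  qed simp
  have head: "take m cs' = take m cs" and tail: "drop m cs' = map2 (\<lambda>q l. (fst q, l)) (drop m cs) ls"
    using assms(1,2) cs' by simp_all
  have "map g (drop m cs') = map2 (\<lambda>q l. (fst q, l)) (map g (drop m cs)) (map (snd \<circ> g) (drop m cs'))"
    unfolding tail using assms(2-4) tail set_drop_subset[of m cs] set_drop_subset[of m cs']
    by (intro map2_rows) auto
  then show ?thesis
    by (metis append_take_drop_id drop_map head map_append take_map)
qed

lemma index_emb_map_replace_row:
  assumes "set cs' \<subseteq> S" "cs' = take q cs @ map (Pair u) ls" "(u, l0) \<in> S"
  shows "map g cs' = take q (map g cs) @ map (Pair (fst (g (u, l0)))) (map (\<lambda>l. snd (g (u, l))) ls)"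
  using assms index_emb_fst_eq[of _ "(u, l0)"] by (auto simp: prod_eq_iff take_map)

end

lemma admissible_subset: "admissible af ar P \<tau> cs \<Longrightarrow> set cs \<subseteq> S \<Longrightarrow> admissible af ar S \<tau> cs"
  by (simp add: admissible_def)

lemma evalt_cong: "(\<And>n. n \<in> fvt t \<Longrightarrow> e n = e' n) \<Longrightarrow> evalt F e t = evalt F e' t"
  by (induction t) (auto intro!: map_cong arg_cong[where f="F _"])

lemma valc_comp:
  "fvt \<tau> \<subseteq> {..<length cs} \<Longrightarrow> valc F (c \<circ> g) \<tau> cs = valc F c \<tau> (map g cs)"
  unfolding valc_def by (rule evalt_cong) auto

lemma length_takeWhile_less: "\<exists>x\<in>set xs. \<not> Q x \<Longrightarrow> length (takeWhile Q xs) < length xs"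
  by (induction xs) auto

lemma length_takeWhile_map_cong:
  "(\<And>x. x \<in> set xs \<Longrightarrow> Q (f x) \<longleftrightarrow> Q' x) \<Longrightarrow> length (takeWhile Q (map f xs)) = length (takeWhile Q' xs)"
  by (induction xs) auto

context
  fixes P :: "('i::linorder \<times> 'i) set" and S :: "('j::linorder \<times> 'j) set" and g
  assumes emb: "index_emb P S g"
begin

lemma sig_ii_pullback: "sig_ii P R lt c \<Longrightarrow> sig_ii S R lt (c \<circ> g)"
  unfolding sig_ii_def using index_emb_mem[OF emb] index_emb_lexless[OF emb] by simp

lemma sig_iii_pullback: "sig_iii af ar P F R lt c \<Longrightarrow> sig_iii af ar S F R lt (c \<circ> g)"
  unfolding sig_iii_def
proof (intro allI impI)
  fix \<tau> cs p
  assume sig: "\<forall>\<tau> cs p. admissible af ar P \<tau> cs \<longrightarrow> p \<in> P \<longrightarrow> (\<forall>q\<in>set cs. fst q < fst p) \<longrightarrow>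
      R lt [valc F c \<tau> cs, c p]"
    and adm: "admissible af ar S \<tau> cs" and "p \<in> S" and below: "\<forall>q\<in>set cs. fst q < fst p"
  have "fst (g q) < fst (g p)" if "q \<in> set cs" for q
    using that below adm \<open>p \<in> S\<close> index_emb_fst_less[OF emb, of q p] by (auto simp: admissible_def)
  then have "\<forall>q\<in>set (map g cs). fst q < fst (g p)"
    by simp
  then have "R lt [valc F c \<tau> (map g cs), c (g p)]"
    using sig index_emb_admissible[OF emb adm] index_emb_mem[OF emb \<open>p \<in> S\<close>] by blast
  with adm show "R lt [valc F (c \<circ> g) \<tau> cs, (c \<circ> g) p]"
    by (simp add: valc_comp admissible_def)
qed

lemma sig_iv_pullback: "sig_iv af ar P F R lt c \<Longrightarrow> sig_iv af ar S F R lt (c \<circ> g)"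
  unfolding sig_iv_def
proof (intro allI impI)
  fix \<tau> cs u v ls m cs'
  assume sig: "\<forall>\<tau> cs u v ls m cs'. admissible af ar P \<tau> cs \<longrightarrow> cs \<noteq> [] \<longrightarrow> u < fst (last cs) \<longrightarrow>
      (u, v) \<in> P \<longrightarrow> R lt [valc F c \<tau> cs, c (u, v)] \<longrightarrow>
      m = length (takeWhile (\<lambda>q. fst q \<le> u) cs) \<longrightarrow> length ls = length cs - m \<longrightarrow>
      cs' = take m cs @ map2 (\<lambda>q l. (fst q, l)) (drop m cs) ls \<longrightarrow>
      set cs' \<subseteq> P \<longrightarrow> sorted_wrt lexless cs' \<longrightarrow> valc F c \<tau> cs = valc F c \<tau> cs'"
    and adm: "admissible af ar S \<tau> cs" and ne: "cs \<noteq> []" and below_last: "u < fst (last cs)"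
    and uv: "(u, v) \<in> S" and less: "R lt [valc F (c \<circ> g) \<tau> cs, (c \<circ> g) (u, v)]"
    and m: "m = length (takeWhile (\<lambda>q. fst q \<le> u) cs)" and ls: "length ls = length cs - m"
    and cs': "cs' = take m cs @ map2 (\<lambda>q l. (fst q, l)) (drop m cs) ls"
    and cs'_S: "set cs' \<subseteq> S" and sorted: "sorted_wrt lexless cs'"
  have cs_S: "set cs \<subseteq> S" and fv: "fvt \<tau> \<subseteq> {..<length cs}"
    using adm by (auto simp: admissible_def)
  have "m \<le> length cs" using m length_takeWhile_le by simp
  then have len': "length cs' = length cs"
    using cs' ls by simp
  have last_S: "last cs \<in> S" using ne cs_S by auto
  define ls' where "ls' = map (snd \<circ> g) (drop m cs')"
  have m': "m = length (takeWhile (\<lambda>q. fst q \<le> fst (g (u, v))) (map g cs))"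
    unfolding m using cs_S uv index_emb_fst_le[OF emb]
    by (intro sym[OF length_takeWhile_map_cong]) auto
  have cs'_g: "map g cs' = take m (map g cs) @ map2 (\<lambda>q l. (fst q, l)) (drop m (map g cs)) ls'"
    unfolding ls'_def using \<open>m \<le> length cs\<close> ls cs_S cs'_S cs' by (rule index_emb_map_replace_columns[OF emb])
  have below_last': "fst (g (u, v)) < fst (last (map g cs))"
    using below_last index_emb_fst_less[OF emb uv last_S] ne by (simp add: last_map)
  have uv': "(fst (g (u, v)), snd (g (u, v))) \<in> P"
    using index_emb_mem[OF emb uv] by simp
  have less': "R lt [valc F c \<tau> (map g cs), c (fst (g (u, v)), snd (g (u, v)))]"
    using less fv by (simp add: valc_comp)
  have ls': "length ls' = length (map g cs) - m"
    using len' by (simp add: ls'_def)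
  have "set (map g cs') \<subseteq> P"
    using cs'_S index_emb_mem[OF emb] by auto
  from sig[rule_format, OF index_emb_admissible[OF emb adm] _ below_last' uv' less' m' ls' cs'_g this]
  have "valc F c \<tau> (map g cs) = valc F c \<tau> (map g cs')"
    using index_emb_sorted[OF emb cs'_S] sorted ne by simp
  then show "valc F (c \<circ> g) \<tau> cs = valc F (c \<circ> g) \<tau> cs'"
    using fv len' by (simp add: valc_comp)
qed

lemma sig1_iv_pullback: "sig1_iv af ar P F R lt c \<Longrightarrow> sig1_iv af ar S F R lt (c \<circ> g)"
  unfolding sig1_iv_def
proof (intro allI impI)
  fix \<tau> cs w j u ls q cs'
  assume sig: "\<forall>\<tau> cs w j u ls q cs'. admissible af ar P \<tau> cs \<longrightarrow> cs \<noteq> [] \<longrightarrow>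
      gt1 (fst (last cs)) \<longrightarrow> ipred w (fst (last cs)) \<longrightarrow> (w, j) \<in> P \<longrightarrow> fst (last cs) \<le> u \<longrightarrow>
      R lt [valc F c \<tau> cs, c (w, j)] \<longrightarrow>
      q = length (takeWhile (\<lambda>p. fst p \<noteq> fst (last cs)) cs) \<longrightarrow> length ls = length cs - q \<longrightarrow>
      cs' = take q cs @ map (Pair u) ls \<longrightarrow>
      set cs' \<subseteq> P \<longrightarrow> sorted_wrt lexless cs' \<longrightarrow> valc F c \<tau> cs = valc F c \<tau> cs'"
    and adm: "admissible af ar S \<tau> cs" and ne: "cs \<noteq> []" and gt1: "gt1 (fst (last cs))"
    and pred: "ipred w (fst (last cs))" and wj: "(w, j) \<in> S" and last_le: "fst (last cs) \<le> u"
    and less: "R lt [valc F (c \<circ> g) \<tau> cs, (c \<circ> g) (w, j)]"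
    and q: "q = length (takeWhile (\<lambda>p. fst p \<noteq> fst (last cs)) cs)" and ls: "length ls = length cs - q"
    and cs': "cs' = take q cs @ map (Pair u) ls"
    and cs'_S: "set cs' \<subseteq> S" and sorted: "sorted_wrt lexless cs'"
  have cs_S: "set cs \<subseteq> S" and fv: "fvt \<tau> \<subseteq> {..<length cs}"
    using adm by (auto simp: admissible_def)
  have "q < length cs"
    unfolding q using ne by (intro length_takeWhile_less bexI[of _ "last cs"]) simp_all
  then have len': "length cs' = length cs" and "ls \<noteq> []" using cs' ls by auto
  then have u_S: "(u, hd ls) \<in> S" using cs' cs'_S by (auto simp: hd_in_set)
  have last_S: "last cs \<in> S" and last_g: "last (map g cs) = g (last cs)"
    using ne cs_S by (auto simp: last_map)
  define ls' where "ls' = map (\<lambda>l. snd (g (u, l))) ls"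
  have q': "q = length (takeWhile (\<lambda>p. fst p \<noteq> fst (last (map g cs))) (map g cs))"
  proof -
    have "fst (g p) \<noteq> fst (g (last cs)) \<longleftrightarrow> fst p \<noteq> fst (last cs)" if "p \<in> set cs" for p
      using that cs_S last_S index_emb_fst_eq[OF emb, of p "last cs"] by auto
    then show ?thesis
      unfolding q last_g by (intro sym[OF length_takeWhile_map_cong])
  qed
  have cs'_g: "map g cs' = take q (map g cs) @ map (Pair (fst (g (u, hd ls)))) ls'"
    unfolding ls'_def using cs'_S cs' u_S by (rule index_emb_map_replace_row[OF emb])
  have gt1_pred': "gt1 (fst (last (map g cs))) \<and> ipred (fst (g (w, j))) (fst (last (map g cs)))"
    using index_emb_ipred[OF emb wj last_S] gt1 pred last_g by simp
  have last_le': "fst (last (map g cs)) \<le> fst (g (u, hd ls))"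
    using index_emb_fst_le[OF emb last_S u_S] last_le last_g by simp
  have wj': "(fst (g (w, j)), snd (g (w, j))) \<in> P"
    using index_emb_mem[OF emb wj] by simp
  have less': "R lt [valc F c \<tau> (map g cs), c (fst (g (w, j)), snd (g (w, j)))]"
    using less fv by (simp add: valc_comp)
  have ls': "length ls' = length (map g cs) - q"
    using ls by (simp add: ls'_def)
  have "set (map g cs') \<subseteq> P"
    using cs'_S index_emb_mem[OF emb] by auto
  from sig[rule_format, OF index_emb_admissible[OF emb adm] _ conjunct1[OF gt1_pred'] conjunct2[OF gt1_pred']
      wj' last_le' less' q' ls' cs'_g this]
  have "valc F c \<tau> (map g cs) = valc F c \<tau> (map g cs')"
    using index_emb_sorted[OF emb cs'_S] sorted ne by simp
  then show "valc F (c \<circ> g) \<tau> cs = valc F (c \<circ> g) \<tau> cs'"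
    using fv len' by (simp add: valc_comp)
qed

end

definition sigma_axioms :: "('f \<Rightarrow> nat) \<Rightarrow> ('r \<Rightarrow> nat) \<Rightarrow> ('i::linorder \<times> 'i) set
     \<Rightarrow> (('f,'r) ssym \<Rightarrow> 'a list \<Rightarrow> 'a) \<Rightarrow> ('r \<Rightarrow> 'a list \<Rightarrow> bool) \<Rightarrow> 'r \<Rightarrow> ('i \<times> 'i \<Rightarrow> 'a) \<Rightarrow> bool" where
  "sigma_axioms af ar P F R lt c \<longleftrightarrow>
     sig_ii P R lt c \<and> sig_iii af ar P F R lt c \<and> sig_iv af ar P F R lt c \<and> sig1_iv af ar P F R lt c"

lemma sigma_axioms_pullback:
  "index_emb P S g \<Longrightarrow> sigma_axioms af ar P F R lt c \<Longrightarrow> sigma_axioms af ar S F R lt (c \<circ> g)"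
  unfolding sigma_axioms_def
  by (meson sig_ii_pullback sig_iii_pullback sig_iv_pullback sig1_iv_pullback)

definition skolem_model :: "('f \<Rightarrow> nat) \<Rightarrow> ('r \<Rightarrow> nat) \<Rightarrow> 'r \<Rightarrow> (('f,'r) ssym,'r) fm set
     \<Rightarrow> 'a set \<Rightarrow> (('f,'r) ssym \<Rightarrow> 'a list \<Rightarrow> 'a) \<Rightarrow> ('r \<Rightarrow> 'a list \<Rightarrow> bool) \<Rightarrow> bool" where
  "skolem_model af ar lt \<Gamma> D F R \<longleftrightarrow>
     is_structure D F \<and> skolem_ok af ar D F R \<and> linord D R lt \<and> (\<forall>\<phi>\<in>\<Gamma>. models D F R \<phi>)"

lemma model_ofD:
  assumes "model_of af ar lt \<Gamma> P csym D F R"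
  shows "skolem_model af ar lt \<Gamma> D (\<lambda>s. F (LS s)) R"
    and "sigma_axioms af ar P (\<lambda>s. F (LS s)) R lt (\<lambda>p. F (csym p) [])"
    and "range (\<lambda>p. F (csym p) []) \<subseteq> D"
  using assms unfolding model_of_def skolem_model_def sigma_axioms_def is_structure_def Let_def
  by auto

lemma model_ofI:
  assumes "skolem_model af ar lt \<Gamma> D FL R" "sigma_axioms af ar P FL R lt c" "range c \<subseteq> D"
    and "inj csym" "\<And>p s. csym p \<noteq> LS s"
  shows "\<exists>F. model_of af ar lt \<Gamma> P csym D F R"
proof -
  obtain d where "d \<in> D"
    using assms(1) unfolding skolem_model_def is_structure_def by blast
  define F where "F s as = (if s \<in> range LS then FL (inv LS s) as
    else if s \<in> range csym then c (inv csym s) else d)" for s as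
  have "(\<lambda>s. F (LS s)) = FL" and "(\<lambda>p. F (csym p) []) = c"
    using assms(4,5) by (auto simp: F_def fun_eq_iff inj_def)
  moreover have "is_structure D F"
    using assms(1,3) \<open>d \<in> D\<close> unfolding skolem_model_def is_structure_def F_def by auto
  ultimately have "model_of af ar lt \<Gamma> P csym D F R"
    using assms(1,2) unfolding model_of_def skolem_model_def sigma_axioms_def Let_def by simp
  then show ?thesis by blast
qed

section \<open>Ultraproducts of Skolem models\<close>

primrec subst_trm :: "(nat \<Rightarrow> ('s + 'x) trm) \<Rightarrow> 's trm \<Rightarrow> ('s + 'x) trm" where
  "subst_trm e (Var n) = e n"
| "subst_trm e (Fun s ts) = Fun (Inl s) (map (subst_trm e) ts)"

inductive_cases wff_FImpE: "wff af ar (FImp \<phi> \<psi>)"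
inductive_cases wff_FAllE: "wff af ar (FAll v \<phi>)"

lemma wff_FNeg: "wff af ar \<phi> \<Longrightarrow> wff af ar (FNeg \<phi>)"
  unfolding FNeg_def by (auto intro: wfs_wft_wff.intros)

text \<open>The ultraproduct, over an ultrafilter on index sets \<open>S\<close>, of the structures interpreting the
  symbols of L^S as in \<open>(D, FL, R)\<close> and the constant \<open>c\<^sub>p\<close> as \<open>cst S p\<close>. Its elements are the
  classes of terms in L^S plus constants (variables denote the fixed element \<open>d0\<close>), represented
  inside the type \<open>'a\<close> through the injection \<open>h\<close>.\<close>

locale skolem_ultraproduct =
  fixes af :: "'f \<Rightarrow> nat" and ar :: "'r \<Rightarrow> nat" and lt :: 'r and \<Gamma> :: "(('f,'r) ssym,'r) fm set"
    and D :: "'b set" and FL :: "('f,'r) ssym \<Rightarrow> 'b list \<Rightarrow> 'b" and R :: "'r \<Rightarrow> 'b list \<Rightarrow> bool"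
    and P' :: "('j::linorder \<times> 'j) set" and cst :: "('j \<times> 'j) set \<Rightarrow> 'j \<times> 'j \<Rightarrow> 'b"
    and U :: "('j \<times> 'j) set filter" and h :: "(('f,'r) ssym + 'j \<times> 'j) trm \<Rightarrow> 'a" and d0 :: 'b
  assumes skolem_model: "skolem_model af ar lt \<Gamma> D FL R"
    and wff_\<Gamma>: "\<forall>\<phi>\<in>\<Gamma>. wff af ar \<phi>"
    and ultrafilter: "ultrafilter U"
    and inj_h: "inj h"
    and d0: "d0 \<in> D"
    and cst_in: "cst S p \<in> D"
    and eventually_sigma_axioms:
      "\<And>A. finite A \<Longrightarrow> A \<subseteq> P' \<Longrightarrow> eventually (\<lambda>S. A \<subseteq> S \<and> sigma_axioms af ar S FL R lt (cst S)) U"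
begin

definition "eval S = evalt (\<lambda>s. case s of Inl s0 \<Rightarrow> FL s0 | Inr p \<Rightarrow> (\<lambda>_. cst S p)) (\<lambda>_. d0)"
definition "ae_eq t t' \<longleftrightarrow> eventually (\<lambda>S. eval S t = eval S t') U"
definition "rep t = h (SOME t'. ae_eq t' t)"
definition "D' = range rep"
definition "pick a = (SOME t. rep t = a)"
definition "FL' s as = rep (Fun (Inl s) (map pick as))"
definition "R' r as \<longleftrightarrow> eventually (\<lambda>S. R r (map (eval S \<circ> pick) as)) U"
definition "c' p = rep (Fun (Inr p) [])"

lemma is_structure: "is_structure D FL" and skolem_ok: "skolem_ok af ar D FL R"
  and linord: "linord D R lt" and models_\<Gamma>: "\<forall>\<phi>\<in>\<Gamma>. models D FL R \<phi>"
  using skolem_model unfolding skolem_model_def by auto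

lemma eval_Inl [simp]: "eval S (Fun (Inl s) ts) = FL s (map (eval S) ts)"
  and eval_Inr [simp]: "eval S (Fun (Inr p) ts) = cst S p"
  unfolding eval_def by simp_all

lemma eval_in: "eval S t \<in> D"
proof (induction t)
  case (Var n)
  then show ?case using d0 by (simp add: eval_def)
next
  case (Fun s ts)
  then have "set (map (eval S) ts) \<subseteq> D" by auto
  then show ?case
    using is_structure cst_in by (cases s) (simp_all add: is_structure_def)
qed

lemma eval_subst_trm: "eval S (subst_trm e t) = evalt FL (eval S \<circ> e) t"
  by (induction t) (simp_all cong: map_cong)

lemma ae_eq_refl: "ae_eq t t"
  by (simp add: ae_eq_def)

lemma ae_eq_sym: "ae_eq t t' \<Longrightarrow> ae_eq t' t"
  unfolding ae_eq_def by (auto elim: eventually_mono)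

lemma ae_eq_trans: "ae_eq t t' \<Longrightarrow> ae_eq t' t'' \<Longrightarrow> ae_eq t t''"
  unfolding ae_eq_def by (auto elim: eventually_elim2)

lemma rep_eq_iff: "rep t = rep t' \<longleftrightarrow> ae_eq t t'"
proof
  assume "rep t = rep t'"
  then have "(SOME u. ae_eq u t) = (SOME u. ae_eq u t')"
    using inj_h by (simp add: rep_def inj_eq)
  moreover have "ae_eq (SOME u. ae_eq u t) t" "ae_eq (SOME u. ae_eq u t') t'"
    by (rule someI, rule ae_eq_refl)+
  ultimately show "ae_eq t t'"
    by (metis ae_eq_sym ae_eq_trans)
next
  assume "ae_eq t t'"
  then have "(\<lambda>u. ae_eq u t) = (\<lambda>u. ae_eq u t')"
    by (intro ext) (meson ae_eq_sym ae_eq_trans)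
  then show "rep t = rep t'"
    by (simp add: rep_def)
qed

lemma rep_pick: "a \<in> D' \<Longrightarrow> rep (pick a) = a"
  unfolding D'_def pick_def by (auto intro: someI)

lemma ae_eq_pick_rep: "ae_eq (pick (rep t)) t"
proof -
  have "rep (pick (rep t)) = rep t"
    by (rule rep_pick) (simp add: D'_def)
  then show ?thesis
    using rep_eq_iff by blast
qed

lemma eventually_eval_pick_rep: "eventually (\<lambda>S. map (eval S) (map pick (map rep ts)) = map (eval S) ts) U"
proof (induction ts)
  case (Cons t ts)
  then show ?case
    using ae_eq_pick_rep[of t] unfolding ae_eq_def by (auto elim: eventually_elim2)
qed simp

lemma FL'_rep: "FL' s (map rep ts) = rep (Fun (Inl s) ts)"
  unfolding FL'_def rep_eq_iff ae_eq_def
  by (rule eventually_mono[OF eventually_eval_pick_rep[of ts]]) (simp only: eval_Inl)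

lemma R'_rep: "R' r (map rep ts) \<longleftrightarrow> eventually (\<lambda>S. R r (map (eval S) ts)) U"
proof -
  have "eventually (\<lambda>S. R r (map (eval S \<circ> pick) (map rep ts)) \<longleftrightarrow> R r (map (eval S) ts)) U"
    by (rule eventually_mono[OF eventually_eval_pick_rep[of ts]])
      (simp only: map_map[symmetric])
  then show ?thesis
    unfolding R'_def by (rule eventually_subst)
qed

lemma evalt_rep: "evalt FL' (rep \<circ> e) t = rep (subst_trm e t)"
proof (induction t)
  case (Fun s ts)
  then have "map (evalt FL' (rep \<circ> e)) ts = map rep (map (subst_trm e) ts)"
    by (simp add: comp_def)
  then show ?case
    by (simp only: evalt.simps subst_trm.simps FL'_rep)
qed simp

text \<open>The Skolem term for the negation of \<open>\<phi>\<close> is a counterexample wherever one exists, so a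
  universal statement holds almost everywhere as soon as all its term instances do.\<close>

lemma eventually_all_of_all_terms:
  assumes wff: "wff af ar \<phi>" and all: "\<And>t. eventually (\<lambda>S. satf D FL R (eval S \<circ> e(v := t)) \<phi>) U"
  shows "eventually (\<lambda>S. \<forall>a\<in>D. satf D FL R ((eval S \<circ> e)(v := a)) \<phi>) U"
proof -
  define t where "t = Fun (Inl (Sk (FNeg \<phi>) v)) (map e (skargs v (FNeg \<phi>)))"
  have "\<forall>a\<in>D. satf D FL R ((eval S \<circ> e)(v := a)) \<phi>"
    if sat: "satf D FL R (eval S \<circ> e(v := t)) \<phi>" for S
  proof (rule ccontr)
    assume "\<not> ?thesis"
    then have "\<exists>a\<in>D. satf D FL R ((eval S \<circ> e)(v := a)) (FNeg \<phi>)"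
      by (auto simp: FNeg_def)
    moreover have "range (eval S \<circ> e) \<subseteq> D"
      using eval_in by auto
    ultimately have "satf D FL R ((eval S \<circ> e)(v := FL (Sk (FNeg \<phi>) v) (map (eval S \<circ> e) (skargs v (FNeg \<phi>))))) (FNeg \<phi>)"
      using skolem_ok wff_FNeg[OF wff] unfolding skolem_ok_def by blast
    moreover have "eval S t = FL (Sk (FNeg \<phi>) v) (map (eval S \<circ> e) (skargs v (FNeg \<phi>)))"
      by (simp add: t_def)
    ultimately show False
      using sat by (simp add: FNeg_def fun_upd_comp)
  qed
  then show ?thesis
    using all[of t] by (auto elim: eventually_mono)
qed

theorem los:
  "wff af ar \<phi> \<Longrightarrow> satf D' FL' R' (rep \<circ> e) \<phi> \<longleftrightarrow> eventually (\<lambda>S. satf D FL R (eval S \<circ> e) \<phi>) U"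
proof (induction \<phi> arbitrary: e)
  case (FEq t u)
  show ?case
    by (simp only: satf.simps evalt_rep rep_eq_iff ae_eq_def eval_subst_trm)
next
  case (FRel r ts)
  have "map (evalt FL' (rep \<circ> e)) ts = map rep (map (subst_trm e) ts)"
    by (simp add: evalt_rep)
  moreover have "map (eval S) (map (subst_trm e) ts) = map (evalt FL (eval S \<circ> e)) ts" for S
    by (simp add: eval_subst_trm)
  ultimately show ?case
    by (simp only: satf.simps R'_rep)
next
  case FFalse
  show ?case
    using ultrafilter_eventually_const[OF ultrafilter, of False] by simp
next
  case (FImp \<phi> \<psi>)
  then have "wff af ar \<phi>" "wff af ar \<psi>"
    by (auto elim: wff_FImpE)
  with FImp.IH show ?case
    by (simp add: ultrafilter_eventually_imp[OF ultrafilter])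
next
  case (FAll v \<phi>)
  then have wff: "wff af ar \<phi>"
    by (auto elim: wff_FAllE)
  have "satf D' FL' R' (rep \<circ> e) (FAll v \<phi>) \<longleftrightarrow> (\<forall>t. satf D' FL' R' (rep \<circ> e(v := t)) \<phi>)"
    by (auto simp: D'_def fun_upd_comp)
  also have "\<dots> \<longleftrightarrow> (\<forall>t. eventually (\<lambda>S. satf D FL R (eval S \<circ> e(v := t)) \<phi>) U)"
    using FAll.IH wff by blast
  also have "\<dots> \<longleftrightarrow> eventually (\<lambda>S. satf D FL R (eval S \<circ> e) (FAll v \<phi>)) U"
  proof
    assume "\<forall>t. eventually (\<lambda>S. satf D FL R (eval S \<circ> e(v := t)) \<phi>) U"
    then show "eventually (\<lambda>S. satf D FL R (eval S \<circ> e) (FAll v \<phi>)) U"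
      using eventually_all_of_all_terms[OF wff] by simp
  next
    assume "eventually (\<lambda>S. satf D FL R (eval S \<circ> e) (FAll v \<phi>)) U"
    then show "\<forall>t. eventually (\<lambda>S. satf D FL R (eval S \<circ> e(v := t)) \<phi>) U"
      by (auto elim!: eventually_mono simp: eval_in fun_upd_comp)
  qed
  finally show ?case .
qed

lemma env_rep_pick: "range e \<subseteq> D' \<Longrightarrow> rep \<circ> (pick \<circ> e) = e"
  using rep_pick by (auto simp: fun_eq_iff)

lemma is_structure': "is_structure D' FL'"
  unfolding is_structure_def D'_def FL'_def by auto

lemma skolem_ok': "skolem_ok af ar D' FL' R'"
  unfolding skolem_ok_def
proof (intro allI impI)
  fix \<phi> v e'
  assume wff: "wff af ar \<phi>" and "range e' \<subseteq> D'" and "\<exists>a\<in>D'. satf D' FL' R' (e'(v := a)) \<phi>"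
  then obtain t where sat: "satf D' FL' R' (e'(v := rep t)) \<phi>"
    unfolding D'_def by blast
  define e where "e = pick \<circ> e'"
  have e': "e' = rep \<circ> e"
    unfolding e_def using env_rep_pick[OF \<open>range e' \<subseteq> D'\<close>] by simp
  with sat have "satf D' FL' R' (rep \<circ> e(v := t)) \<phi>"
    by (simp add: fun_upd_comp[symmetric])
  then have "eventually (\<lambda>S. satf D FL R (eval S \<circ> e(v := t)) \<phi>) U"
    using los[OF wff] by blast
  moreover define t' where "t' = Fun (Inl (Sk \<phi> v)) (map e (skargs v \<phi>))"
  have "satf D FL R (eval S \<circ> e(v := t')) \<phi>" if "satf D FL R (eval S \<circ> e(v := t)) \<phi>" for S
  proof -
    have "\<exists>a\<in>D. satf D FL R ((eval S \<circ> e)(v := a)) \<phi>"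
      using that eval_in by (intro bexI[of _ "eval S t"]) (simp_all add: fun_upd_comp)
    moreover have "range (eval S \<circ> e) \<subseteq> D"
      using eval_in by auto
    ultimately show ?thesis
      using skolem_ok wff unfolding skolem_ok_def t'_def by (simp add: fun_upd_comp)
  qed
  ultimately have "satf D' FL' R' (rep \<circ> e(v := t')) \<phi>"
    using los[OF wff] by (auto elim: eventually_mono)
  moreover have "FL' (Sk \<phi> v) (map e' (skargs v \<phi>)) = rep t'"
    unfolding e' t'_def by (simp add: FL'_rep flip: map_map)
  ultimately show "satf D' FL' R' (e'(v := FL' (Sk \<phi> v) (map e' (skargs v \<phi>)))) \<phi>"
    by (simp add: e' fun_upd_comp[symmetric])
qed

lemma R'_rep_pair: "R' r [rep t, rep t'] \<longleftrightarrow> eventually (\<lambda>S. R r [eval S t, eval S t']) U"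
  using R'_rep[of r "[t, t']"] by simp

lemma linord': "linord D' R' lt"
  unfolding linord_def
proof (intro conjI ballI impI)
  have irrefl: "\<forall>a\<in>D. \<not> R lt [a, a]"
    and trans: "\<forall>a\<in>D. \<forall>b\<in>D. \<forall>c\<in>D. R lt [a, b] \<longrightarrow> R lt [b, c] \<longrightarrow> R lt [a, c]"
    and total: "\<forall>a\<in>D. \<forall>b\<in>D. a \<noteq> b \<longrightarrow> R lt [a, b] \<or> R lt [b, a]"
    using linord unfolding linord_def by blast+
  show "\<not> R' lt [a, a]" if "a \<in> D'" for a
  proof -
    obtain t where "a = rep t" using \<open>a \<in> D'\<close> unfolding D'_def by blast
    have "\<not> eventually (\<lambda>S. False) U"
      using ultrafilter_eventually_const[OF ultrafilter] by simp
    moreover have "eventually (\<lambda>S. R lt [eval S t, eval S t]) U \<Longrightarrow> eventually (\<lambda>S. False) U"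
      by (erule eventually_mono) (use irrefl eval_in in blast)
    ultimately show ?thesis
      unfolding \<open>a = rep t\<close> R'_rep_pair by blast
  qed
  show "R' lt [a, c]" if abc: "a \<in> D'" "b \<in> D'" "c \<in> D'" and "R' lt [a, b]" "R' lt [b, c]"
    for a b c
  proof -
    obtain t1 t2 t3 where a: "a = rep t1" "b = rep t2" "c = rep t3"
      using abc unfolding D'_def by blast
    have "eventually (\<lambda>S. R lt [eval S t1, eval S t2]) U" "eventually (\<lambda>S. R lt [eval S t2, eval S t3]) U"
      using \<open>R' lt [a, b]\<close> \<open>R' lt [b, c]\<close> unfolding a R'_rep_pair by blast+
    then have "eventually (\<lambda>S. R lt [eval S t1, eval S t3]) U"
      by (rule eventually_elim2) (use trans eval_in in blast)
    then show ?thesis unfolding a R'_rep_pair .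
  qed
  show "R' lt [a, b] \<or> R' lt [b, a]" if ab: "a \<in> D'" "b \<in> D'" and "a \<noteq> b" for a b
  proof -
    obtain t1 t2 where a: "a = rep t1" "b = rep t2"
      using ab unfolding D'_def by blast
    then have "\<not> ae_eq t1 t2" using \<open>a \<noteq> b\<close> rep_eq_iff by simp
    then have "eventually (\<lambda>S. eval S t1 \<noteq> eval S t2) U"
      unfolding ae_eq_def using ultrafilter_eventually_not[OF ultrafilter] by blast
    then have "eventually (\<lambda>S. R lt [eval S t1, eval S t2] \<or> R lt [eval S t2, eval S t1]) U"
      by (rule eventually_mono) (use total eval_in in blast)
    then show ?thesis
      unfolding a R'_rep_pair ultrafilter_eventually_disj[OF ultrafilter] .
  qed
qed

lemma models_\<Gamma>': "\<forall>\<phi>\<in>\<Gamma>. models D' FL' R' \<phi>"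
  unfolding models_def
proof (intro ballI allI impI)
  fix \<phi> and e :: "nat \<Rightarrow> 'a" assume "\<phi> \<in> \<Gamma>" "range e \<subseteq> D'"
  have "satf D FL R (eval S \<circ> (pick \<circ> e)) \<phi>" for S
  proof -
    have "range (eval S \<circ> (pick \<circ> e)) \<subseteq> D"
      using eval_in by auto
    then show ?thesis
      using models_\<Gamma> \<open>\<phi> \<in> \<Gamma>\<close> unfolding models_def by blast
  qed
  then have "satf D' FL' R' (rep \<circ> (pick \<circ> e)) \<phi>"
    using los wff_\<Gamma> \<open>\<phi> \<in> \<Gamma>\<close> by simp
  then show "satf D' FL' R' e \<phi>"
    using env_rep_pick[OF \<open>range e \<subseteq> D'\<close>] by simp
qed

lemma valc'_rep: "valc FL' c' \<tau> cs = rep (subst_trm (\<lambda>n. Fun (Inr (cs ! n)) []) \<tau>)"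
proof -
  have "(\<lambda>n. c' (cs ! n)) = rep \<circ> (\<lambda>n. Fun (Inr (cs ! n)) [])"
    by (simp add: c'_def fun_eq_iff)
  then show ?thesis
    unfolding valc_def by (simp add: evalt_rep)
qed

lemma eval_subst_consts: "eval S (subst_trm (\<lambda>n. Fun (Inr (cs ! n)) []) \<tau>) = valc FL (cst S) \<tau> cs"
  by (simp add: eval_subst_trm valc_def comp_def)

lemma R'_valc_c':
  "R' lt [valc FL' c' \<tau> cs, c' p] \<longleftrightarrow> eventually (\<lambda>S. R lt [valc FL (cst S) \<tau> cs, cst S p]) U"
  unfolding valc'_rep c'_def R'_rep_pair eval_subst_consts eval_Inr ..

lemma R'_c'_c': "R' lt [c' p, c' q] \<longleftrightarrow> eventually (\<lambda>S. R lt [cst S p, cst S q]) U"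
  unfolding c'_def R'_rep_pair eval_Inr ..

lemma valc'_eq_iff:
  "valc FL' c' \<tau> cs = valc FL' c' \<tau> cs' \<longleftrightarrow>
    eventually (\<lambda>S. valc FL (cst S) \<tau> cs = valc FL (cst S) \<tau> cs') U"
  unfolding valc'_rep rep_eq_iff ae_eq_def eval_subst_consts ..

lemma sig_ii': "sig_ii P' R' lt c'"
  unfolding sig_ii_def
proof (intro ballI)
  fix p q assume "p \<in> P'" "q \<in> P'"
  then have "eventually (\<lambda>S. {p, q} \<subseteq> S \<and> sigma_axioms af ar S FL R lt (cst S)) U"
    by (intro eventually_sigma_axioms) auto
  then have "eventually (\<lambda>S. R lt [cst S p, cst S q] \<longleftrightarrow> lexless p q) U"
    by (rule eventually_mono) (simp add: sigma_axioms_def sig_ii_def)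
  then have "R' lt [c' p, c' q] \<longleftrightarrow> eventually (\<lambda>S. lexless p q) U"
    unfolding R'_c'_c' by (rule eventually_subst)
  then show "R' lt [c' p, c' q] \<longleftrightarrow> lexless p q"
    using ultrafilter_eventually_const[OF ultrafilter] by simp
qed

lemma sig_iii': "sig_iii af ar P' FL' R' lt c'"
  unfolding sig_iii_def
proof (intro allI impI)
  fix \<tau> cs p
  assume adm: "admissible af ar P' \<tau> cs" and "p \<in> P'" and below: "\<forall>q\<in>set cs. fst q < fst p"
  then have "eventually (\<lambda>S. insert p (set cs) \<subseteq> S \<and> sigma_axioms af ar S FL R lt (cst S)) U"
    by (intro eventually_sigma_axioms) (auto simp: admissible_def)
  then have "eventually (\<lambda>S. R lt [valc FL (cst S) \<tau> cs, cst S p]) U"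
  proof (rule eventually_mono)
    fix S assume "insert p (set cs) \<subseteq> S \<and> sigma_axioms af ar S FL R lt (cst S)"
    then have sig: "sig_iii af ar S FL R lt (cst S)" and "p \<in> S" "set cs \<subseteq> S"
      by (auto simp: sigma_axioms_def)
    with admissible_subset[OF adm] below show "R lt [valc FL (cst S) \<tau> cs, cst S p]"
      unfolding sig_iii_def by blast
  qed
  then show "R' lt [valc FL' c' \<tau> cs, c' p]"
    unfolding R'_valc_c' .
qed

lemma sig_iv': "sig_iv af ar P' FL' R' lt c'"
  unfolding sig_iv_def
proof (intro allI impI)
  fix \<tau> cs u v ls m cs'
  assume adm: "admissible af ar P' \<tau> cs" and ne: "cs \<noteq> []" and below: "u < fst (last cs)"
    and "(u, v) \<in> P'" and less: "R' lt [valc FL' c' \<tau> cs, c' (u, v)]"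
    and m: "m = length (takeWhile (\<lambda>q. fst q \<le> u) cs)" and ls: "length ls = length cs - m"
    and cs': "cs' = take m cs @ map2 (\<lambda>q l. (fst q, l)) (drop m cs) ls"
    and "set cs' \<subseteq> P'" and sorted: "sorted_wrt lexless cs'"
  let ?A = "insert (u, v) (set cs \<union> set cs')"
  have "eventually (\<lambda>S. (?A \<subseteq> S \<and> sigma_axioms af ar S FL R lt (cst S)) \<and>
      R lt [valc FL (cst S) \<tau> cs, cst S (u, v)]) U"
    using adm \<open>(u, v) \<in> P'\<close> \<open>set cs' \<subseteq> P'\<close> less
    by (intro eventually_conj eventually_sigma_axioms) (auto simp: admissible_def R'_valc_c')
  then have "eventually (\<lambda>S. valc FL (cst S) \<tau> cs = valc FL (cst S) \<tau> cs') U"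
  proof (rule eventually_mono)
    fix S assume "(?A \<subseteq> S \<and> sigma_axioms af ar S FL R lt (cst S)) \<and> R lt [valc FL (cst S) \<tau> cs, cst S (u, v)]"
    then have sig: "sig_iv af ar S FL R lt (cst S)" and "set cs \<subseteq> S" "(u, v) \<in> S" "set cs' \<subseteq> S"
      and less_S: "R lt [valc FL (cst S) \<tau> cs, cst S (u, v)]"
      by (auto simp: sigma_axioms_def)
    from sig[unfolded sig_iv_def, rule_format, OF admissible_subset[OF adm \<open>set cs \<subseteq> S\<close>] ne below
        \<open>(u, v) \<in> S\<close> less_S m ls cs' \<open>set cs' \<subseteq> S\<close> sorted]
    show "valc FL (cst S) \<tau> cs = valc FL (cst S) \<tau> cs'" .
  qed
  then show "valc FL' c' \<tau> cs = valc FL' c' \<tau> cs'"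
    unfolding valc'_eq_iff .
qed

lemma sig1_iv': "sig1_iv af ar P' FL' R' lt c'"
  unfolding sig1_iv_def
proof (intro allI impI)
  fix \<tau> cs w j u ls q cs'
  assume adm: "admissible af ar P' \<tau> cs" and ne: "cs \<noteq> []" and gt1: "gt1 (fst (last cs))"
    and pred: "ipred w (fst (last cs))" and "(w, j) \<in> P'" and last_le: "fst (last cs) \<le> u"
    and less: "R' lt [valc FL' c' \<tau> cs, c' (w, j)]"
    and q: "q = length (takeWhile (\<lambda>p. fst p \<noteq> fst (last cs)) cs)" and ls: "length ls = length cs - q"
    and cs': "cs' = take q cs @ map (Pair u) ls"
    and "set cs' \<subseteq> P'" and sorted: "sorted_wrt lexless cs'"
  let ?A = "insert (w, j) (set cs \<union> set cs')"
  have "eventually (\<lambda>S. (?A \<subseteq> S \<and> sigma_axioms af ar S FL R lt (cst S)) \<and>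
      R lt [valc FL (cst S) \<tau> cs, cst S (w, j)]) U"
    using adm \<open>(w, j) \<in> P'\<close> \<open>set cs' \<subseteq> P'\<close> less
    by (intro eventually_conj eventually_sigma_axioms) (auto simp: admissible_def R'_valc_c')
  then have "eventually (\<lambda>S. valc FL (cst S) \<tau> cs = valc FL (cst S) \<tau> cs') U"
  proof (rule eventually_mono)
    fix S assume "(?A \<subseteq> S \<and> sigma_axioms af ar S FL R lt (cst S)) \<and> R lt [valc FL (cst S) \<tau> cs, cst S (w, j)]"
    then have sig: "sig1_iv af ar S FL R lt (cst S)" and "set cs \<subseteq> S" "(w, j) \<in> S" "set cs' \<subseteq> S"
      and less_S: "R lt [valc FL (cst S) \<tau> cs, cst S (w, j)]"
      by (auto simp: sigma_axioms_def)
    from sig[unfolded sig1_iv_def, rule_format, OF admissible_subset[OF adm \<open>set cs \<subseteq> S\<close>] ne gt1 pred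
        \<open>(w, j) \<in> S\<close> last_le less_S q ls cs' \<open>set cs' \<subseteq> S\<close> sorted]
    show "valc FL (cst S) \<tau> cs = valc FL (cst S) \<tau> cs'" .
  qed
  then show "valc FL' c' \<tau> cs = valc FL' c' \<tau> cs'"
    unfolding valc'_eq_iff .
qed

theorem ultraproduct_model:
  "skolem_model af ar lt \<Gamma> D' FL' R'" "sigma_axioms af ar P' FL' R' lt c'" "range c' \<subseteq> D'"
  using is_structure' skolem_ok' linord' models_\<Gamma>' sig_ii' sig_iii' sig_iv' sig1_iv'
  unfolding skolem_model_def sigma_axioms_def by (auto simp: D'_def c'_def)

end

theorem model_of_transfer:
  fixes P :: "('i::linorder \<times> 'i) set" and P' :: "('j::linorder \<times> 'j) set"
    and csym' :: "'j \<times> 'j \<Rightarrow> ('f,'r,'o) asym" and h :: "(('f,'r) ssym + 'j \<times> 'j) trm \<Rightarrow> ('f,'r,'o) asym"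
  assumes model: "model_of af ar lt \<Gamma> P csym D F R" and wff: "\<forall>\<phi>\<in>\<Gamma>. wff af ar \<phi>"
    and "inj h" "inj csym'" "\<And>p s. csym' p \<noteq> LS s"
    and finitely_embeddable: "\<And>S. finite S \<Longrightarrow> S \<subseteq> P' \<Longrightarrow> \<exists>g. index_emb P S g"
  shows "\<exists>D' F' R'. model_of af ar lt \<Gamma> P' csym' D' F' R'"
proof -
  define FL where "FL s = F (LS s)" for s
  define c where "c p = F (csym p) []" for p
  have skolem: "skolem_model af ar lt \<Gamma> D FL R" and sigma: "sigma_axioms af ar P FL R lt c"
    and "range c \<subseteq> D"
    using model_ofD[OF model] unfolding FL_def[abs_def] c_def[abs_def] by simp_all
  then obtain d0 where "d0 \<in> D"
    unfolding skolem_model_def is_structure_def by blast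
  obtain U where U: "ultrafilter U"
    and cones: "\<And>A. finite A \<Longrightarrow> A \<subseteq> P' \<Longrightarrow> eventually (\<lambda>S. finite S \<and> A \<subseteq> S \<and> S \<subseteq> P') U"
    using ex_ultrafilter_finite_subsets by blast
  define g :: "('j \<times> 'j) set \<Rightarrow> 'j \<times> 'j \<Rightarrow> 'i \<times> 'i" where "g S = (SOME g. index_emb P S g)" for S
  have "eventually (\<lambda>S. A \<subseteq> S \<and> sigma_axioms af ar S FL R lt (c \<circ> g S)) U"
    if "finite A" "A \<subseteq> P'" for A
    using cones[OF that]
  proof (rule eventually_mono)
    fix S assume "finite S \<and> A \<subseteq> S \<and> S \<subseteq> P'"
    then have "A \<subseteq> S" and "\<exists>g. index_emb P S g"
      using finitely_embeddable by auto
    then have "index_emb P S (g S)"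
      unfolding g_def by (simp add: someI_ex)
    with \<open>A \<subseteq> S\<close> show "A \<subseteq> S \<and> sigma_axioms af ar S FL R lt (c \<circ> g S)"
      using sigma_axioms_pullback[OF _ sigma] by blast
  qed
  then interpret skolem_ultraproduct af ar lt \<Gamma> D FL R P' "\<lambda>S. c \<circ> g S" U h d0
    using skolem wff U \<open>inj h\<close> \<open>d0 \<in> D\<close> \<open>range c \<subseteq> D\<close> by unfold_locales auto
  show ?thesis
    using model_ofI[OF ultraproduct_model \<open>inj csym'\<close>] \<open>\<And>p s. csym' p \<noteq> LS s\<close> by blast
qed

section \<open>Embeddings between \<open>C\<close> and \<open>C*\<close>\<close>

lemma index_emb_subset: "index_emb P S g \<Longrightarrow> S' \<subseteq> S \<Longrightarrow> index_emb P S' g"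
  unfolding index_emb_def by blast

lemma index_emb_map_prod:
  fixes f k :: "'j::linorder \<Rightarrow> 'i::linorder"
  assumes f: "strict_mono_on (fst ` S) f" and k: "strict_mono_on (snd ` S) k"
    and mem: "\<And>i j. (i, j) \<in> S \<Longrightarrow> (f i, k j) \<in> P"
    and pred: "\<And>w i. w \<in> fst ` S \<Longrightarrow> i \<in> fst ` S \<Longrightarrow> gt1 i \<Longrightarrow> ipred w i \<Longrightarrow>
      gt1 (f i) \<and> ipred (f w) (f i)"
  shows "index_emb P S (map_prod f k)"
  unfolding index_emb_def
proof (intro conjI ballI)
  show "map_prod f k ` S \<subseteq> P"
    using mem by auto
  fix p q assume "p \<in> S" "q \<in> S"
  then have "fst p \<in> fst ` S" "fst q \<in> fst ` S" "snd p \<in> snd ` S" "snd q \<in> snd ` S"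
    by auto
  then show "lexless (map_prod f k p) (map_prod f k q) \<longleftrightarrow> lexless p q"
    and "fst (map_prod f k p) < fst (map_prod f k q) \<longleftrightarrow> fst p < fst q"
    and "gt1 (fst q) \<longrightarrow> ipred (fst p) (fst q) \<longrightarrow>
      gt1 (fst (map_prod f k q)) \<and> ipred (fst (map_prod f k p)) (fst (map_prod f k q))"
    using strict_mono_on_less[OF f] strict_mono_on_eq[OF f] strict_mono_on_less[OF k] pred
    by (simp_all add: lexless_def map_prod_def split_beta)
qed

lemma gt1_nat_iff: "gt1 (n :: nat) \<longleftrightarrow> 2 \<le> n"
proof
  show "gt1 n \<Longrightarrow> 2 \<le> n"
    unfolding gt1_def by auto
  show "2 \<le> n \<Longrightarrow> gt1 n"
    unfolding gt1_def by (intro exI[of _ 0] exI[of _ 1]) simp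
qed

lemma ipred_nat_iff: "ipred (m :: nat) n \<longleftrightarrow> n = Suc m"
proof
  assume "ipred m n"
  then have "m < n" "\<not> Suc m < n"
    unfolding ipred_def by blast+
  then show "n = Suc m" by simp
qed (simp add: ipred_def)

lemma strict_mono_on_card_less:
  fixes A :: "'a::linorder set"
  assumes "finite A"
  shows "strict_mono_on A (\<lambda>x. card {r\<in>A. r < x})"
proof (rule strict_mono_onI)
  fix x y assume "x \<in> A" "y \<in> A" "x < y"
  have "{r\<in>A. r < x} \<subseteq> {r\<in>A. r < y}"
    using \<open>x < y\<close> by auto
  moreover have "x \<in> {r\<in>A. r < y} - {r\<in>A. r < x}"
    using \<open>x \<in> A\<close> \<open>x < y\<close> by simp
  ultimately show "card {r\<in>A. r < x} < card {r\<in>A. r < y}"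
    using assms by (intro psubset_card_mono) (simp, blast)
qed

text \<open>The rows occurring in \<open>S\<close> are numbered consecutively from 2 on, so that all numbers are
  \<open>gt1\<close> and a row immediately following another one gets the next number.\<close>

lemma index_emb_finite_into_nat:
  fixes S :: "('a::linorder \<times> 'a) set"
  assumes "finite S"
  shows "\<exists>g :: 'a \<times> 'a \<Rightarrow> nat \<times> nat. index_emb UNIV S g"
proof -
  let ?row = "\<lambda>i. 2 + card {r\<in>fst ` S. r < i}" and ?col = "\<lambda>j. card {r\<in>snd ` S. r < j}"
  have row: "strict_mono_on (fst ` S) ?row"
    using strict_mono_on_card_less[of "fst ` S"] assms by (simp add: strict_mono_on_def)
  have col: "strict_mono_on (snd ` S) ?col"
    using strict_mono_on_card_less[of "snd ` S"] assms by simp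
  have row_Suc: "card {r\<in>fst ` S. r < i} = Suc (card {r\<in>fst ` S. r < w})" if "w \<in> fst ` S" "ipred w i" for w i
  proof -
    have "r < i \<longleftrightarrow> r < w \<or> r = w" for r
      using \<open>ipred w i\<close> unfolding ipred_def by (meson less_trans linorder_neqE)
    then have "{r\<in>fst ` S. r < i} = insert w {r\<in>fst ` S. r < w}"
      using \<open>w \<in> fst ` S\<close> by blast
    moreover have "finite {r\<in>fst ` S. r < w}"
      using assms by simp
    ultimately show ?thesis by simp
  qed
  have "index_emb UNIV S (map_prod ?row ?col)"
    by (rule index_emb_map_prod[OF row col]) (simp_all add: gt1_nat_iff ipred_nat_iff row_Suc)
  then show ?thesis by blast
qed

definition has_cofinal_map :: "'o::wellorder \<Rightarrow> 'o \<Rightarrow> bool" where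
  "has_cofinal_map lam d \<longleftrightarrow> (\<exists>g. (\<forall>x<d. g x < lam) \<and> (\<forall>y<lam. \<exists>x<d. y \<le> g x))"

lemma has_cofinal_map_cofinality: "has_cofinal_map lam (cofinality lam)"
proof -
  have "has_cofinal_map lam lam"
    unfolding has_cofinal_map_def by (rule exI[of _ id]) auto
  then show ?thesis
    unfolding cofinality_def has_cofinal_map_def[symmetric] by (rule LeastI)
qed

lemma cofinality_le: "has_cofinal_map lam d \<Longrightarrow> cofinality lam \<le> d"
  unfolding cofinality_def has_cofinal_map_def[symmetric] by (rule Least_le)

text \<open>An infinite cardinal is a limit ordinal: otherwise it would be in bijection with its
  predecessor.\<close>

lemma infinite_cardinal_no_max:
  fixes lam :: "'o::wellorder"
  assumes "is_cardinal lam" "infinite {x. x < lam}" "y < lam"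
  shows "\<exists>z. y < z \<and> z < lam"
proof (rule ccontr)
  assume no_max: "\<not> ?thesis"
  have "x < lam \<longleftrightarrow> x < y \<or> x = y" for x
    using no_max \<open>y < lam\<close> by (metis less_trans linorder_neqE)
  then have below_lam: "{x. x < lam} = {x. x < y} \<union> {y}"
    by blast
  then have "infinite {x. x < y}"
    using \<open>infinite {x. x < lam}\<close> by simp
  then obtain f where "bij_betw f {x. x < y} {x. x < lam}"
    using infinite_imp_bij_betw2[of "{x. x < y}" y] below_lam by auto
  with assms(1) \<open>y < lam\<close> show False
    unfolding is_cardinal_def by blast
qed

lemma cofinality_no_max:
  fixes lam :: "'o::wellorder"
  assumes "is_cardinal lam" "infinite {x. x < lam}" "y < cofinality lam"
  shows "\<exists>z. y < z \<and> z < cofinality lam"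
proof (rule ccontr)
  assume "\<not> ?thesis"
  then have below_cof: "x < cofinality lam \<Longrightarrow> x \<le> y" for x
    by (meson not_le)
  obtain g where g_below: "\<forall>x<cofinality lam. g x < lam"
    and g_cofinal: "\<forall>z<lam. \<exists>x<cofinality lam. z \<le> g x"
    using has_cofinal_map_cofinality[of lam] unfolding has_cofinal_map_def by blast
  obtain z' where "g y < z'" "z' < lam"
    using infinite_cardinal_no_max[OF assms(1,2)] g_below assms(3) by blast
  have "has_cofinal_map lam y"
    unfolding has_cofinal_map_def
  proof (intro exI[of _ g] conjI allI impI)
    show "g x < lam" if "x < y" for x
      using that g_below assms(3) by simp
    show "\<exists>x<y. z \<le> g x" if "z < lam" for z
    proof -
      have "max z z' < lam"
        using \<open>z < lam\<close> \<open>z' < lam\<close> by simp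
      then obtain x where x: "x < cofinality lam" "max z z' \<le> g x"
        using g_cofinal by blast
      then have "x \<noteq> y"
        using \<open>g y < z'\<close> by auto
      then have "x < y"
        using below_cof[OF x(1)] by simp
      with x show ?thesis
        by auto
    qed
  qed
  then show False
    using cofinality_le[of lam y] assms(3) by simp
qed

lemma ex_infinite_mu:
  fixes lam eta :: "'o::wellorder" and mu :: "'o \<Rightarrow> 'o"
  assumes "singular_cardinal lam" "eta = cofinality lam" and mu_cofinal: "\<forall>y<lam. \<exists>i<eta. y < mu i"
  shows "\<exists>i<eta. infinite {x. x < mu i}"
proof (rule ccontr)
  assume "\<not> ?thesis"
  then have finite_mu: "finite {x. x < mu i}" if "i < eta" for i
    using that by blast
  have "is_cardinal lam" "infinite {x. x < lam}" "eta < lam"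
    using assms(1,2) unfolding singular_cardinal_def by auto
  have finite_below: "finite {x. x < y}" if "y < lam" for y
  proof -
    obtain i where "i < eta" "y < mu i" using mu_cofinal \<open>y < lam\<close> by blast
    then have "{x. x < y} \<subseteq> {x. x < mu i}"
      by auto
    then show ?thesis
      using finite_mu[OF \<open>i < eta\<close>] by (rule finite_subset)
  qed
  obtain g where g_below: "\<forall>x<eta. g x < lam" and g_cofinal: "\<forall>z<lam. \<exists>x<eta. z \<le> g x"
    using has_cofinal_map_cofinality[of lam] assms(2) unfolding has_cofinal_map_def by blast
  have "finite (g ` {x. x < eta})"
    using finite_below[OF \<open>eta < lam\<close>] by simp
  moreover obtain y0 where "y0 < lam"
    using \<open>eta < lam\<close> by blast
  then have "g ` {x. x < eta} \<noteq> {}"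
    using g_cofinal by blast
  ultimately have max_in: "Max (g ` {x. x < eta}) \<in> g ` {x. x < eta}"
    and max_ge: "\<And>x. x < eta \<Longrightarrow> g x \<le> Max (g ` {x. x < eta})"
    by auto
  have "Max (g ` {x. x < eta}) < lam"
    using max_in g_below by auto
  then obtain z where "Max (g ` {x. x < eta}) < z" "z < lam"
    using infinite_cardinal_no_max[OF \<open>is_cardinal lam\<close> \<open>infinite {x. x < lam}\<close>] by blast
  moreover obtain x where "x < eta" "z \<le> g x"
    using g_cofinal \<open>z < lam\<close> by blast
  ultimately show False
    using max_ge[OF \<open>x < eta\<close>] by simp
qed

lemma ex_successor_chain:
  fixes i0 eta :: "'o::wellorder"
  assumes "i0 < eta" and no_max: "\<And>y. y < eta \<Longrightarrow> \<exists>z. y < z \<and> z < eta"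
  obtains x :: "nat \<Rightarrow> 'o" where "x 0 = i0" "strict_mono x" "\<And>n. x n < eta" "\<And>n. ipred (x n) (x (Suc n))"
proof
  define succ :: "'o \<Rightarrow> 'o" where "succ y = (LEAST z. y < z)" for y
  have succ: "y < succ y" "succ y < eta" "ipred y (succ y)" if "y < eta" for y
  proof -
    obtain z where "y < z" "z < eta" using no_max \<open>y < eta\<close> by blast
    then show "y < succ y" "succ y < eta"
      unfolding succ_def using LeastI[of "\<lambda>z. y < z" z] Least_le[of "\<lambda>z. y < z" z] by auto
    then show "ipred y (succ y)"
      unfolding ipred_def succ_def using not_less_Least by blast
  qed
  define x where "x n = (succ ^^ n) i0" for n
  show "x 0 = i0" by (simp add: x_def)
  show x_below: "x n < eta" for n
    by (induction n) (simp_all add: x_def assms(1) succ)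
  show "strict_mono x"
    unfolding strict_mono_Suc_iff using succ x_below by (simp add: x_def)
  show "ipred (x n) (x (Suc n))" for n
    using succ x_below by (simp add: x_def)
qed

text \<open>Rows of C* go to an \<open>\<omega>\<close>-sequence of consecutive indices below \<open>\<eta>\<close>, starting at a row \<open>i\<^sub>0\<close>
  of infinite length; columns go to the first \<open>\<omega>\<close> elements of that row.\<close>

lemma index_emb_nat_into_C:
  fixes lam eta :: "'o::wellorder" and mu :: "'o \<Rightarrow> 'o"
  assumes "singular_cardinal lam" "eta = cofinality lam"
    and mu_mono: "\<forall>i i'. i < i' \<and> i' < eta \<longrightarrow> mu i < mu i'"
    and mu_cofinal: "\<forall>y<lam. \<exists>i<eta. y < mu i"
  shows "\<exists>g :: nat \<times> nat \<Rightarrow> 'o \<times> 'o. index_emb {(i, j). i < eta \<and> j < mu i} UNIV g"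
proof -
  have "is_cardinal lam" "infinite {x. x < lam}"
    using assms(1) unfolding singular_cardinal_def by auto
  obtain i0 where "i0 < eta" and inf: "infinite {x. x < mu i0}"
    using ex_infinite_mu[OF assms(1,2) mu_cofinal] by blast
  obtain x where x0: "x 0 = i0" and "strict_mono x" and x_below: "\<And>n. x n < eta"
    and x_pred: "\<And>n. ipred (x n) (x (Suc n))"
    using ex_successor_chain[OF \<open>i0 < eta\<close>] cofinality_no_max[OF \<open>is_cardinal lam\<close> \<open>infinite {x. x < lam}\<close>]
      assms(2) by blast
  define z where "z = enumerate {x. x < mu i0}"
  have "strict_mono z"
    unfolding z_def using inf by (simp add: strict_mono_def)
  have mu_x: "mu i0 \<le> mu (x n)" for n
  proof (cases n)
    case (Suc m)
    then have "i0 < x n"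
      using \<open>strict_mono x\<close> x0 by (metis strict_mono_less zero_less_Suc)
    then show ?thesis
      using mu_mono x_below[of n] by (simp add: less_imp_le)
  qed (simp add: x0)
  have "z l < mu (x n)" for n l
    using enumerate_in_set[OF inf, of l] mu_x[of n] unfolding z_def by simp
  then have "(x n, z l) \<in> {(i, j). i < eta \<and> j < mu i}" for n l
    using x_below by simp
  moreover have "gt1 (x n) \<and> ipred (x m) (x n)" if "gt1 n" "ipred m n" for m n
  proof -
    have "n = Suc m" "2 \<le> n"
      using that by (simp_all add: ipred_nat_iff gt1_nat_iff)
    then have "x 0 < x 1" "x 1 < x n"
      using \<open>strict_mono x\<close> by (simp_all add: strict_mono_less)
    then show ?thesis
      unfolding gt1_def using x_pred \<open>n = Suc m\<close> by blast
  qed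
  ultimately have "index_emb {(i, j). i < eta \<and> j < mu i} UNIV (map_prod x z)"
    using \<open>strict_mono x\<close> \<open>strict_mono z\<close>
    by (intro index_emb_map_prod) (auto simp: strict_mono_on_def strict_mono_def)
  then show ?thesis by blast
qed

section \<open>Coding terms in the symbol type\<close>

instance trm :: (countable) countable by countable_datatype
instance fm :: (countable, countable) countable by countable_datatype
instance ssym :: (countable, countable) countable by countable_datatype

text \<open>Consistency asks for a model whose universe lies in the type of symbols. The term
  ultraproduct is placed there by coding terms with an injective pairing on the infinite type
  \<open>'o\<close>, with tags taken from a copy of the natural numbers inside \<open>'o\<close>.\<close>

fun enc_list :: "('a \<times> 'a \<Rightarrow> 'a) \<Rightarrow> (nat \<Rightarrow> 'a) \<Rightarrow> 'a list \<Rightarrow> 'a" where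
  "enc_list pair tag [] = pair (tag 0, tag 0)"
| "enc_list pair tag (x # xs) = pair (tag 1, pair (x, enc_list pair tag xs))"

fun enc_trm :: "('a \<times> 'a \<Rightarrow> 'a) \<Rightarrow> (nat \<Rightarrow> 'a) \<Rightarrow> ('s \<Rightarrow> 'a) \<Rightarrow> 's trm \<Rightarrow> 'a" where
  "enc_trm pair tag code (Var n) = pair (tag 0, tag n)"
| "enc_trm pair tag code (Fun s ts) = pair (tag 1, pair (code s, enc_list pair tag (map (enc_trm pair tag code) ts)))"

context
  fixes pair :: "'a \<times> 'a \<Rightarrow> 'a" and tag :: "nat \<Rightarrow> 'a"
  assumes inj_pair: "inj pair" and inj_tag: "inj tag"
begin

lemma inj_enc_list: "inj (enc_list pair tag)"
proof (rule injI)
  show "enc_list pair tag xs = enc_list pair tag ys \<Longrightarrow> xs = ys" for xs ys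
  proof (induction xs arbitrary: ys)
    case Nil
    then show ?case by (cases ys) (auto simp: inj_eq inj_pair inj_tag)
  next
    case (Cons x xs)
    then show ?case by (cases ys) (auto simp: inj_eq inj_pair inj_tag)
  qed
qed

lemma inj_enc_trm: "inj code \<Longrightarrow> inj (enc_trm pair tag code)"
proof (rule injI)
  assume "inj code"
  show "enc_trm pair tag code t = enc_trm pair tag code t' \<Longrightarrow> t = t'" for t t'
  proof (induction t arbitrary: t')
    case (Var n)
    then show ?case by (cases t') (auto simp: inj_eq inj_pair inj_tag)
  next
    case (Fun s ts)
    then obtain ts' where t': "t' = Fun s ts'"
      and enc_eq: "map (enc_trm pair tag code) ts = map (enc_trm pair tag code) ts'"
      using \<open>inj code\<close> inj_enc_list by (cases t') (auto simp: inj_eq inj_pair inj_tag)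
    have "ts = ts'"
      using enc_eq by (rule list.inj_map_strong[rotated]) (use Fun.IH in blast)
    then show ?case by (simp add: t')
  qed
qed

end

lemma ex_inj_trm_asym:
  fixes \<iota> :: "'j \<Rightarrow> 'o"
  assumes "infinite (UNIV :: 'o set)" "inj \<iota>"
  shows "\<exists>h :: (('f::countable,'r::countable) ssym + 'j \<times> 'j) trm \<Rightarrow> ('f,'r,'o) asym. inj h"
proof -
  obtain pair :: "'o \<times> 'o \<Rightarrow> 'o" where "bij_betw pair UNIV UNIV"
    using card_of_Times_same_infinite[OF assms(1)] card_of_ordIso by fastforce
  then have inj_pair: "inj pair"
    by (simp add: bij_betw_def)
  obtain tag :: "nat \<Rightarrow> 'o" where inj_tag: "inj tag"
    using infinite_countable_subset[OF assms(1)] by blast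
  define code :: "('f,'r) ssym + 'j \<times> 'j \<Rightarrow> 'o" where
    "code = case_sum (\<lambda>s. pair (tag 0, tag (to_nat s))) (\<lambda>(p, q). pair (tag 1, pair (\<iota> p, \<iota> q)))"
  have "inj code"
  proof (rule injI)
    fix x y assume "code x = code y"
    then show "x = y"
      unfolding code_def using inj_pair inj_tag assms(2)
      by (cases x; cases y) (auto simp: inj_eq split: prod.splits)
  qed
  then have "inj (\<lambda>t. CC (enc_trm pair tag code t) (enc_trm pair tag code t) :: ('f,'r,'o) asym)"
    using inj_enc_trm[OF inj_pair inj_tag \<open>inj code\<close>] by (auto simp: inj_def)
  then show ?thesis by blast
qed

theorem lemma4p2:
  fixes af :: "'f::countable \<Rightarrow> nat" and ar :: "'r::countable \<Rightarrow> nat" and lt :: 'r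
    and lam eta :: "'o::wellorder" and mu :: "'o \<Rightarrow> 'o"
    and \<Gamma> :: "(('f,'r) ssym,'r) fm set"
  assumes "ar lt = 2"
    and "singular_cardinal lam"
    and "eta = cofinality lam"
    and "\<forall>i<eta. is_cardinal (mu i) \<and> mu i < lam"
    and "\<forall>i i'. i < i' \<and> i' < eta \<longrightarrow> mu i < mu i'"
    and "\<forall>y<lam. \<exists>i<eta. y < mu i"
    and "\<forall>\<phi>\<in>\<Gamma>. wff af ar \<phi> \<and> fvf \<phi> = {}"
  shows "consistent_C af ar lt eta mu \<Gamma> \<longleftrightarrow> consistent_Cstar af ar lt \<Gamma> TYPE('o)"
proof -
  have "infinite (UNIV :: 'o set)"
    using assms(2) infinite_super[OF subset_UNIV] unfolding singular_cardinal_def by blast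
  have wff: "\<forall>\<phi>\<in>\<Gamma>. wff af ar \<phi>"
    using assms(7) by blast
  obtain \<iota> :: "nat \<Rightarrow> 'o" where "inj \<iota>"
    using infinite_countable_subset[OF \<open>infinite UNIV\<close>] by blast
  obtain h_Cstar :: "(('f,'r) ssym + nat \<times> nat) trm \<Rightarrow> ('f,'r,'o) asym" where "inj h_Cstar"
    using ex_inj_trm_asym[OF \<open>infinite UNIV\<close> \<open>inj \<iota>\<close>] by blast
  obtain h_C :: "(('f,'r) ssym + 'o \<times> 'o) trm \<Rightarrow> ('f,'r,'o) asym" where "inj h_C"
    using ex_inj_trm_asym[OF \<open>infinite UNIV\<close> inj_on_id] by blast
  obtain g :: "nat \<times> nat \<Rightarrow> 'o \<times> 'o" where g: "index_emb {(i, j). i < eta \<and> j < mu i} UNIV g"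
    using index_emb_nat_into_C[OF assms(2,3,5,6)] by blast
  have inj_CS: "inj (\<lambda>(i, j). CS i j :: ('f,'r,'o) asym)" and inj_CC: "inj (\<lambda>(i, j). CC i j :: ('f,'r,'o) asym)"
    by (auto simp: inj_def)
  have CS_not_LS: "(\<lambda>(i, j). CS i j :: ('f,'r,'o) asym) p \<noteq> LS s"
    and CC_not_LS: "(\<lambda>(i, j). CC i j :: ('f,'r,'o) asym) q \<noteq> LS s" for p q s
    by (simp_all add: case_prod_beta)
  show ?thesis
    unfolding consistent_C_def consistent_Cstar_def
  proof (intro iffI; elim exE)
    fix D F R assume "model_of af ar lt \<Gamma> {(i, j). i < eta \<and> j < mu i} (\<lambda>(i, j). CC i j) D F R"
    then show "\<exists>D F R. model_of af ar lt \<Gamma> UNIV (\<lambda>(i, j). CS i j) (D :: ('f,'r,'o) asym set) F R"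
      by (rule model_of_transfer[OF _ wff \<open>inj h_Cstar\<close> inj_CS CS_not_LS])
        (use index_emb_subset[OF g] in blast)
  next
    fix D F R assume "model_of af ar lt \<Gamma> UNIV (\<lambda>(i, j). CS i j) D F R"
    then show "\<exists>D F R. model_of af ar lt \<Gamma> {(i, j). i < eta \<and> j < mu i} (\<lambda>(i, j). CC i j)
        (D :: ('f,'r,'o) asym set) F R"
      by (rule model_of_transfer[OF _ wff \<open>inj h_C\<close> inj_CC CC_not_LS]) (rule index_emb_finite_into_nat)
  qed
qed

end
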